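(* Assume $\mu<0$ and conditions (C1) and (C2). Then for every $T\ge1$, $$\mu^*_T:=\mathbb E^*_{\pi^*}(f(X_1,Y_{1+T}))<\mu^*:=\pi^*(f).$$
   Context: Let $E$ be a finite set and $P,Q$ irreducible aperiodic stochastic $E\times E$ matrices with invariant probability vectors $\pi_P,\pi_Q$; $\pi=\pi_P\otimes\pi_Q$. Let $f:E\times E\to\mathbb Z$ with gcd of its values equal to $1$; $\nu(f)=\sum f\,d\nu$; $\mu=\pi(f)$. A cycle w.r.t. $P$ is a sequence $x_1,\dots,x_n$ with $P(x_k,x_{k+1})>0$ for all $k$, indices mod $n$. (C1): for some $n\ge1$ there are cycles $x_1,\dots,x_n$ w.r.t. $P$ and $y_1,\dots,y_n$ w.r.t. $Q$ with $\sum_kf(x_k,y_k)>0$. (C2): for every $T\ge1$ there are $n\ge1$ and cycles $x_1,\dots,x_n$ w.r.t. $P$ and $y_1,\dots,y_n$ w.r.t. $Q$ with $\sum_kf(x_k,y_k)\ne\sum_kf(x_k,y_{k+T\bmod n})$. Let $\Phi(\theta)_{(x,y),(x',y')}=e^{\theta f(x',y')}P_{x,x'}Q_{y,y'}$, $\varphi(\theta)$ its spectral radius, $\theta^*>0$ the unique positive solution of $\varphi(\theta)=1$, $r^*$ a positive right eigenvector of $\Phi(\theta^* )$ for eigenvalue 1, $R^*_{(x,y),(x',y')}=\frac{r^*(x',y')}{r^*(x,y)}\Phi(\theta^* )_{(x,y),(x',y')}$, and $\pi^*$ the invariant probability vector of $R^*$. $\mathbb P^*_{\pi^*}$ (expectation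 $\mathbb E^*_{\pi^*}$) is the law under which $(X_n,Y_n)_{n\ge0}$ is a stationary Markov chain on $E^2$ with transition matrix $R^*$. *)

theory Defs
  imports Complex_Main "HOL-Library.FuncSet"
begin

definition stochastic :: "('s::finite \<Rightarrow> 's \<Rightarrow> real) \<Rightarrow> bool" where
  "stochastic A \<longleftrightarrow> (\<forall>x y. 0 \<le> A x y) \<and> (\<forall>x. (\<Sum>y\<in>UNIV. A x y) = 1)"

fun matpow :: "('s::finite \<Rightarrow> 's \<Rightarrow> real) \<Rightarrow> nat \<Rightarrow> 's \<Rightarrow> 's \<Rightarrow> real" where
  "matpow A 0 = (\<lambda>x y. if x = y then 1 else 0)"
| "matpow A (Suc n) = (\<lambda>x z. \<Sum>y\<in>UNIV. matpow A n x y * A y z)"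

definition irreducible_mat :: "('s::finite \<Rightarrow> 's \<Rightarrow> real) \<Rightarrow> bool" where
  "irreducible_mat A \<longleftrightarrow> (\<forall>x y. \<exists>n\<ge>1. matpow A n x y > 0)"

definition aperiodic_mat :: "('s::finite \<Rightarrow> 's \<Rightarrow> real) \<Rightarrow> bool" where
  "aperiodic_mat A \<longleftrightarrow> (\<forall>x. Gcd {n::nat. n \<ge> 1 \<and> matpow A n x x > 0} = 1)"

definition invariant_prob :: "('s::finite \<Rightarrow> 's \<Rightarrow> real) \<Rightarrow> ('s \<Rightarrow> real) \<Rightarrow> bool" where
  "invariant_prob A p \<longleftrightarrow> (\<forall>x. 0 \<le> p x) \<and> (\<Sum>x\<in>UNIV. p x) = 1
      \<and> (\<forall>y. (\<Sum>x\<in>UNIV. p x * A x y) = p y)"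

definition is_cycle :: "('s \<Rightarrow> 's \<Rightarrow> real) \<Rightarrow> nat \<Rightarrow> (nat \<Rightarrow> 's) \<Rightarrow> bool" where
  "is_cycle A n x \<longleftrightarrow> n \<ge> 1 \<and> (\<forall>k<n. A (x k) (x ((k + 1) mod n)) > 0)"

definition eigenvalue_mat :: "('s::finite \<Rightarrow> 's \<Rightarrow> real) \<Rightarrow> complex \<Rightarrow> bool" where
  "eigenvalue_mat A c \<longleftrightarrow> (\<exists>v::'s \<Rightarrow> complex. v \<noteq> (\<lambda>_. 0) \<and>
      (\<forall>x. (\<Sum>y\<in>UNIV. complex_of_real (A x y) * v y) = c * v x))"

definition spectral_radius_mat :: "('s::finite \<Rightarrow> 's \<Rightarrow> real) \<Rightarrow> real" where
  "spectral_radius_mat A = Sup {cmod c | c. eigenvalue_mat A c}"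

definition Phi :: "('e::finite \<Rightarrow> 'e \<Rightarrow> real) \<Rightarrow> ('e \<Rightarrow> 'e \<Rightarrow> real) \<Rightarrow> ('e \<times> 'e \<Rightarrow> int)
    \<Rightarrow> real \<Rightarrow> ('e \<times> 'e) \<Rightarrow> ('e \<times> 'e) \<Rightarrow> real" where
  "Phi P Q f \<theta> = (\<lambda>(x, y) (x', y'). exp (\<theta> * of_int (f (x', y'))) * P x x' * Q y y')"

text \<open>Doob transform R of a matrix with positive right eigenvector r for eigenvalue 1.\<close>
definition doob :: "('s \<Rightarrow> 's \<Rightarrow> real) \<Rightarrow> ('s \<Rightarrow> real) \<Rightarrow> 's \<Rightarrow> 's \<Rightarrow> real" where
  "doob A r = (\<lambda>z z'. r z' / r z * A z z')"

text \<open>Expectation of g(Z_i, Z_j) (i, j \<le> m) for the Markov chain (Z_n) with initial law p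
  and transition matrix R, computed from the law of (Z_0,...,Z_m):
  P(Z_0 = w 0, ..., Z_m = w m) = p (w 0) * prod_{k<m} R (w k) (w (k+1)).\<close>
definition markov_expect2 :: "('s::finite \<Rightarrow> real) \<Rightarrow> ('s \<Rightarrow> 's \<Rightarrow> real) \<Rightarrow> nat
    \<Rightarrow> nat \<Rightarrow> nat \<Rightarrow> ('s \<Rightarrow> 's \<Rightarrow> real) \<Rightarrow> real" where
  "markov_expect2 p R m i j g =
     (\<Sum>w\<in>PiE {..m} (\<lambda>_. UNIV). p (w 0) * (\<Prod>k<m. R (w k) (w (Suc k))) * g (w i) (w j))"

end

theory Submission
  imports Defs
begin

text \<open>
  Let \<open>p\<close> be the law of the stationary chain \<open>Z\<^sub>k = (X\<^sub>k, Y\<^sub>k)\<close> with kernel \<open>R = R\<^sup>*\<close> and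
  \<open>q\<close> the law of the lagged process \<open>(X\<^sub>k, Y\<^sub>k\<^sub>+\<^sub>T)\<close>. A word of length \<open>n\<close> of \<open>q\<close> determines the
  words of length \<open>n + T\<close> of \<open>p\<close> it comes from up to \<open>2T\<close> letters, so the entropy rate of \<open>q\<close>
  is at least that of \<open>p\<close>. Both processes have the same laws of \<open>(X\<^sub>0, X\<^sub>1)\<close> and of
  \<open>(Y\<^sub>0, Y\<^sub>1)\<close>, and \<open>ln R(z, z')\<close> is \<open>\<theta>\<^sup>* f(z')\<close> plus functions of these pairs plus a
  coboundary, hence
  \<open>E\<^sub>q ln R(Z\<^sub>0, Z\<^sub>1) - E\<^sub>p ln R(Z\<^sub>0, Z\<^sub>1) = \<theta>\<^sup>* (\<mu>\<^sup>*\<^sub>T - \<mu>\<^sup>*)\<close>. If \<open>\<mu>\<^sup>*\<^sub>T \<ge> \<mu>\<^sup>*\<close>, the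
  relative entropy of \<open>q\<close> with respect to the \<open>R\<close>-chain therefore stays bounded as the word
  length grows; being superadditive, it vanishes, so \<open>q\<close> is itself a Markov chain with kernel \<open>R\<close>.
  Comparing \<open>p\<close> and \<open>q\<close> along long periodic paths built from a pair of cycles then shows that
  lagging the \<open>Y\<close>-cycle by \<open>T\<close> can only increase the \<open>f\<close>-sum around the cycles. After \<open>n\<close> such
  lags the cycles are back in phase, so all these sums agree, contradicting (C2).
\<close>

section \<open>Words and path weights\<close>

definition words :: "nat \<Rightarrow> 'a list set" where
  "words n = {xs. length xs = n}"

lemma mem_words [simp]: "xs \<in> words n \<longleftrightarrow> length xs = n"
  by (simp add: words_def)

lemma words_eq_lists: "words n = {xs. set xs \<subseteq> UNIV \<and> length xs = n}"
  by (simp add: words_def)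

lemma finite_words [simp]: "finite (words n :: 'a::finite list set)"
  unfolding words_eq_lists by (rule finite_lists_length_eq) simp

lemma card_words: "card (words n :: 'a::finite list set) = card (UNIV :: 'a set) ^ n"
  unfolding words_eq_lists by (rule card_lists_length_eq) simp

lemma words_0: "words 0 = {[]}"
  by (auto simp: words_def)

lemma sum_words_add:
  fixes g :: "'a::finite list \<Rightarrow> 'b::comm_monoid_add"
  shows "(\<Sum>w\<in>words (n + m). g w) = (\<Sum>u\<in>words n. \<Sum>v\<in>words m. g (u @ v))"
proof -
  have "bij_betw (\<lambda>(u, v). u @ v) (words n \<times> words m) (words (n + m) :: 'a list set)"
    by (rule bij_betw_byWitness[where f' = "\<lambda>w. (take n w, drop n w)"]) auto
  then have "(\<Sum>w\<in>words (n + m). g w) = (\<Sum>(u, v)\<in>words n \<times> words m. g (u @ v))"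
    by (simp add: sum.reindex_bij_betw[symmetric] case_prod_unfold)
  then show ?thesis
    by (simp add: sum.cartesian_product)
qed

lemma sum_words_1:
  fixes g :: "'a::finite list \<Rightarrow> 'b::comm_monoid_add"
  shows "(\<Sum>w\<in>words (Suc 0). g w) = (\<Sum>z\<in>UNIV. g [z])"
proof -
  have singletons: "words (Suc 0) = (\<lambda>z. [z]) ` UNIV"
    by (auto simp: length_Suc_conv)
  show ?thesis
    unfolding singletons by (simp add: sum.reindex inj_on_def)
qed

lemma sum_words_Suc:
  fixes g :: "'a::finite list \<Rightarrow> 'b::comm_monoid_add"
  shows "(\<Sum>w\<in>words (Suc n). g w) = (\<Sum>z\<in>UNIV. \<Sum>v\<in>words n. g (z # v))"
  using sum_words_add[where n = "Suc 0" and m = n and g = g] by (simp add: sum_words_1)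

lemma sum_words_Suc_snoc:
  fixes g :: "'a::finite list \<Rightarrow> 'b::comm_monoid_add"
  shows "(\<Sum>w\<in>words (Suc n). g w) = (\<Sum>v\<in>words n. \<Sum>z\<in>UNIV. g (v @ [z]))"
  using sum_words_add[where n = n and m = "Suc 0" and g = g] by (simp add: sum_words_1)

lemma sum_words_2:
  fixes g :: "'a::finite list \<Rightarrow> 'b::comm_monoid_add"
  shows "(\<Sum>w\<in>words 2. g w) = (\<Sum>z\<in>UNIV. \<Sum>z'\<in>UNIV. g [z, z'])"
  by (simp add: numeral_2_eq_2 sum_words_Suc words_0)

fun path_weight :: "('s \<Rightarrow> 's \<Rightarrow> real) \<Rightarrow> 's list \<Rightarrow> real" where
  "path_weight R [] = 1"
| "path_weight R [z] = 1"
| "path_weight R (z # z' # v) = R z z' * path_weight R (z' # v)"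

lemma path_weight_append:
  "path_weight R (u @ z # v) = path_weight R (u @ [z]) * path_weight R (z # v)"
  by (induction R u rule: path_weight.induct) (auto simp: mult.assoc)

lemma path_weight_snoc: "path_weight R (u @ [z, z']) = path_weight R (u @ [z]) * R z z'"
  using path_weight_append[of R u z "[z']"] by simp

lemma path_weight_map_upt:
  "path_weight R (map g [a..<a + Suc m]) = (\<Prod>k<m. R (g (a + k)) (g (a + Suc k)))"
proof (induction m arbitrary: a)
  case (Suc m)
  have "[a..<a + Suc (Suc m)] = a # [Suc a..<Suc a + Suc m]"
    "[Suc a..<Suc a + Suc m] = Suc a # [Suc (Suc a)..<Suc a + Suc m]"
    by (simp_all add: upt_conv_Cons)
  then have "path_weight R (map g [a..<a + Suc (Suc m)])
      = R (g a) (g (Suc a)) * path_weight R (map g [Suc a..<Suc a + Suc m])"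
    by (simp only: list.map path_weight.simps)
  also have "\<dots> = R (g a) (g (Suc a)) * (\<Prod>k<m. R (g (Suc a + k)) (g (Suc a + Suc k)))"
    using Suc[of "Suc a"] by simp
  also have "\<dots> = (\<Prod>k<Suc m. R (g (a + k)) (g (a + Suc k)))"
    by (subst prod.lessThan_Suc_shift) simp
  finally show ?case .
qed simp

lemma path_weight_nonneg: "(\<And>z z'. 0 \<le> R z z') \<Longrightarrow> 0 \<le> path_weight R w"
  by (induction R w rule: path_weight.induct) auto

lemma path_weight_pos_iff:
  assumes "\<And>z z'. 0 \<le> R z z'"
  shows "0 < path_weight R w \<longleftrightarrow> (\<forall>k. Suc k < length w \<longrightarrow> 0 < R (w ! k) (w ! Suc k))"
proof (induction w rule: induct_list012)
  case (3 z z' v)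
  then show ?case
    using assms path_weight_nonneg[of R "z' # v"]
    by (auto simp: zero_less_mult_iff less_Suc_eq_0_disj nth_Cons' split: if_splits)
qed simp_all

section \<open>Stationary laws and relative entropy\<close>

text \<open>\<open>p w\<close> is the probability that the process starts with the word \<open>w\<close>.\<close>
locale stationary_law =
  fixes p :: "'s::finite list \<Rightarrow> real"
  assumes Nil [simp]: "p [] = 1"
    and nonneg: "0 \<le> p w"
    and sum_snoc: "(\<Sum>z\<in>UNIV. p (w @ [z])) = p w"
    and sum_Cons: "(\<Sum>z\<in>UNIV. p (z # w)) = p w"
begin

lemma sum_append_words: "(\<Sum>v\<in>words k. p (u @ v)) = p u"
proof (induction k)
  case (Suc k)
  have "(\<Sum>v\<in>words (Suc k). p (u @ v)) = (\<Sum>v\<in>words k. \<Sum>z\<in>UNIV. p ((u @ v) @ [z]))"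
    by (simp add: sum_words_Suc_snoc)
  then show ?case
    using Suc by (simp only: sum_snoc)
qed (simp add: words_0)

lemma sum_prepend_words: "(\<Sum>v\<in>words k. p (v @ u)) = p u"
proof (induction k)
  case (Suc k)
  have "(\<Sum>v\<in>words (Suc k). p (v @ u)) = (\<Sum>v\<in>words k. \<Sum>z\<in>UNIV. p (z # v @ u))"
    by (simp add: sum_words_Suc sum.swap[where B = "words k"])
  then show ?case
    using Suc by (simp only: sum_Cons)
qed (simp add: words_0)

lemma sum_words: "(\<Sum>v\<in>words k. p v) = 1"
  using sum_append_words[where u = "[]"] by simp

lemma le_prefix: "p (u @ v) \<le> p u"
proof -
  have "p (u @ v) \<le> (\<Sum>v'\<in>words (length v). p (u @ v'))"
    by (rule member_le_sum) (simp_all add: nonneg)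
  then show ?thesis
    by (simp add: sum_append_words)
qed

lemma sum_window:
  "(\<Sum>w\<in>words (a + c + b). p w * h (take c (drop a w))) = (\<Sum>u\<in>words c. p u * h u)"
proof -
  have "(\<Sum>w\<in>words (a + (c + b)). p w * h (take c (drop a w)))
      = (\<Sum>x\<in>words a. \<Sum>u\<in>words c. \<Sum>y\<in>words b. p (x @ u @ y) * h u)"
    by (simp add: sum_words_add)
  also have "\<dots> = (\<Sum>u\<in>words c. (\<Sum>x\<in>words a. \<Sum>y\<in>words b. p ((x @ u) @ y)) * h u)"
    by (subst sum.swap) (simp add: sum_distrib_right)
  also have "\<dots> = (\<Sum>u\<in>words c. p u * h u)"
    by (simp only: sum_append_words) (simp add: sum_prepend_words)
  finally show ?thesis
    by (simp add: add.assoc)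
qed

end

lemma mult_ln_div_ge_diff:
  fixes a b :: real
  assumes "0 \<le> a" "0 \<le> b" "0 < a \<Longrightarrow> 0 < b"
  shows "a - b \<le> a * ln (a / b)"
proof (cases "a = 0")
  case False
  then have "0 < a" "0 < b"
    using assms by auto
  then have "a * ln (b / a) \<le> a * (b / a - 1)"
    by (intro mult_left_mono ln_le_minus_one) auto
  with \<open>0 < a\<close> \<open>0 < b\<close> show ?thesis
    by (simp add: ln_div algebra_simps)
qed (use assms in simp)

lemma mult_ln_div_eq_diff_imp_eq:
  fixes a b :: real
  assumes "0 \<le> a" "0 \<le> b" "0 < a \<Longrightarrow> 0 < b" "a * ln (a / b) = a - b"
  shows "a = b"
proof (cases "a = 0")
  case False
  then have "0 < a" "0 < b"
    using assms by auto
  with assms(4) have "ln (b / a) = b / a - 1"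
    by (simp add: ln_div field_simps)
  with \<open>0 < a\<close> \<open>0 < b\<close> have "b / a = 1"
    by (intro ln_eq_minus_one) auto
  with \<open>0 < a\<close> show ?thesis
    by simp
qed (use assms in simp)

lemma log_sum_inequality:
  fixes a b :: "'i \<Rightarrow> real"
  assumes "finite I" and a: "\<And>i. i \<in> I \<Longrightarrow> 0 \<le> a i" and b: "\<And>i. i \<in> I \<Longrightarrow> 0 \<le> b i"
    and ab: "\<And>i. i \<in> I \<Longrightarrow> 0 < a i \<Longrightarrow> 0 < b i"
  shows "(\<Sum>i\<in>I. a i) * ln ((\<Sum>i\<in>I. a i) / (\<Sum>i\<in>I. b i)) \<le> (\<Sum>i\<in>I. a i * ln (a i / b i))"
proof (cases "\<forall>i\<in>I. a i = 0")
  case False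
  then obtain j where j: "j \<in> I" "0 < a j"
    using a by force
  define c where "c = (\<Sum>i\<in>I. a i) / (\<Sum>i\<in>I. b i)"
  have "0 < a j" "a j \<le> (\<Sum>i\<in>I. a i)" "0 < b j" "b j \<le> (\<Sum>i\<in>I. b i)"
    using j assms by (auto intro: member_le_sum)
  then have sums: "0 < (\<Sum>i\<in>I. a i)" "0 < (\<Sum>i\<in>I. b i)"
    by linarith+
  then have "0 < c"
    by (simp add: c_def)
  have pointwise: "a i - b i * c \<le> a i * ln (a i / b i) - a i * ln c" if "i \<in> I" for i
  proof (cases "a i = 0")
    case False
    with that a ab have "0 < a i" "0 < b i"
      by (simp_all add: order_less_le)
    then have "a i - b i * c \<le> a i * ln (a i / (b i * c))"
      using \<open>0 < c\<close> by (intro mult_ln_div_ge_diff) auto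
    with \<open>0 < a i\<close> \<open>0 < b i\<close> \<open>0 < c\<close> show ?thesis
      by (simp add: ln_div ln_mult algebra_simps)
  qed (use that b \<open>0 < c\<close> in simp)
  have "(\<Sum>i\<in>I. a i - b i * c) \<le> (\<Sum>i\<in>I. a i * ln (a i / b i) - a i * ln c)"
    by (rule sum_mono) (rule pointwise)
  moreover have "(\<Sum>i\<in>I. b i * c) = (\<Sum>i\<in>I. a i)"
    using sums by (simp add: c_def flip: sum_distrib_right sum_divide_distrib)
  ultimately show ?thesis
    by (simp add: sum_subtractf c_def flip: sum_distrib_right)
qed simp

lemma sum_pos_imp_ex_pos:
  fixes g :: "'a \<Rightarrow> 'b::{ordered_comm_monoid_add, linorder}"
  assumes "0 < sum g A"
  shows "\<exists>x\<in>A. 0 < g x"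
  by (meson assms not_le sum_nonpos)

lemma mult_ln_mult:
  fixes a b c :: real
  assumes "0 \<le> a" "0 \<le> b" "c \<noteq> 0 \<Longrightarrow> 0 < a * b"
  shows "c * ln (a * b) = c * ln a + c * ln b"
proof (cases "c = 0")
  case False
  with assms have "0 < a" "0 < b"
    by (auto simp: zero_less_mult_iff)
  then show ?thesis
    by (simp add: ln_mult distrib_left)
qed simp

definition negentropy :: "('s::finite list \<Rightarrow> real) \<Rightarrow> nat \<Rightarrow> real" where
  "negentropy p n = (\<Sum>w\<in>words n. p w * ln (p w))"

locale markov_kernel =
  fixes R :: "'s::finite \<Rightarrow> 's \<Rightarrow> real"
  assumes stochastic: "stochastic R"
begin

lemma kernel_nonneg: "0 \<le> R z z'"
  using stochastic by (simp add: stochastic_def)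

lemma row_sum: "(\<Sum>z'\<in>UNIV. R z z') = 1"
  using stochastic by (simp add: stochastic_def)

lemma path_weight_nonneg: "0 \<le> path_weight R w"
  by (rule path_weight_nonneg) (rule kernel_nonneg)

lemma path_weight_pos_iff:
  "0 < path_weight R w \<longleftrightarrow> (\<forall>k. Suc k < length w \<longrightarrow> 0 < R (w ! k) (w ! Suc k))"
  by (rule path_weight_pos_iff) (rule kernel_nonneg)

lemma path_weight_snoc_last:
  "path_weight R (z # v @ [z']) = path_weight R (z # v) * R (last (z # v)) z'"
  by (cases v rule: rev_cases) (simp_all add: path_weight_snoc[of R "z # _", simplified])

lemma sum_path_weight: "(\<Sum>v\<in>words k. path_weight R (z # v)) = 1"
proof (induction k)
  case (Suc k)
  then show ?case
    by (simp add: sum_words_Suc_snoc path_weight_snoc_last row_sum flip: sum_distrib_left)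
qed (simp add: words_0)

end

locale law_on_paths = markov_kernel R + stationary_law p
  for R :: "'s::finite \<Rightarrow> 's \<Rightarrow> real" and p :: "'s list \<Rightarrow> real" +
  assumes supported: "0 < p w \<Longrightarrow> 0 < path_weight R w"
begin

definition mean_log_kernel :: real where
  "mean_log_kernel = (\<Sum>z\<in>UNIV. \<Sum>z'\<in>UNIV. p [z, z'] * ln (R z z'))"

definition rel_entropy :: "nat \<Rightarrow> real" where
  "rel_entropy k = (\<Sum>w\<in>words (Suc k). p w * ln (p w / (p [hd w] * path_weight R w)))"

lemma pos_imp_hd_pos: "0 < p (z # v) \<Longrightarrow> 0 < p [z]"
  using le_prefix[of "[z]" v] by simp

lemma sum_ln_path_weight: "(\<Sum>w\<in>words (Suc k). p w * ln (path_weight R w)) = real k * mean_log_kernel"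
proof (induction k)
  case (Suc k)
  have split: "p (z # z' # v) * ln (path_weight R (z # z' # v))
      = p (z # z' # v) * ln (R z z') + p (z # z' # v) * ln (path_weight R (z' # v))" for z z' v
    using supported[of "z # z' # v"] nonneg[of "z # z' # v"] unfolding path_weight.simps
    by (intro mult_ln_mult kernel_nonneg path_weight_nonneg) simp
  have pair_marginal: "(\<Sum>v\<in>words k. p (z # z' # v)) = p [z, z']" for z z'
    using sum_append_words[of "[z, z']" k] by simp
  have "(\<Sum>z\<in>UNIV. \<Sum>z'\<in>UNIV. \<Sum>v\<in>words k. p (z # z' # v) * ln (path_weight R (z' # v)))
      = (\<Sum>z'\<in>UNIV. \<Sum>v\<in>words k. (\<Sum>z\<in>UNIV. p (z # z' # v)) * ln (path_weight R (z' # v)))"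
    by (subst sum.swap) (simp only: sum_distrib_right, rule sum.cong[OF refl], rule sum.swap)
  also have "\<dots> = real k * mean_log_kernel"
    using Suc.IH by (simp only: sum_Cons sum_words_Suc)
  finally have tail: "(\<Sum>z\<in>UNIV. \<Sum>z'\<in>UNIV. \<Sum>v\<in>words k.
      p (z # z' # v) * ln (path_weight R (z' # v))) = real k * mean_log_kernel" .
  have "(\<Sum>w\<in>words (Suc (Suc k)). p w * ln (path_weight R w))
      = (\<Sum>z\<in>UNIV. \<Sum>z'\<in>UNIV. \<Sum>v\<in>words k. p (z # z' # v) * ln (R z z'))
        + (\<Sum>z\<in>UNIV. \<Sum>z'\<in>UNIV. \<Sum>v\<in>words k. p (z # z' # v) * ln (path_weight R (z' # v)))"
    by (simp only: sum_words_Suc split sum.distrib)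
  also have "(\<Sum>z\<in>UNIV. \<Sum>z'\<in>UNIV. \<Sum>v\<in>words k. p (z # z' # v) * ln (R z z'))
      = mean_log_kernel"
    by (simp only: mean_log_kernel_def pair_marginal flip: sum_distrib_right)
  finally show ?case
    unfolding tail by (simp add: algebra_simps)
qed (simp add: sum_words_1)

lemma rel_entropy_eq:
  "rel_entropy k = negentropy p (Suc k) - negentropy p (Suc 0) - real k * mean_log_kernel"
proof -
  have hd_term: "(\<Sum>w\<in>words (Suc k). p w * ln (p [hd w])) = negentropy p (Suc 0)"
  proof -
    have "(\<Sum>w\<in>words (Suc k). p w * ln (p [hd w]))
        = (\<Sum>z\<in>UNIV. (\<Sum>v\<in>words k. p ([z] @ v)) * ln (p [z]))"
      by (simp only: sum_words_Suc sum_distrib_right append_Cons append_Nil list.sel)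
    then show ?thesis
      by (simp only: sum_append_words negentropy_def sum_words_1)
  qed
  have "rel_entropy k = (\<Sum>w\<in>words (Suc k).
      p w * ln (p w) - p w * ln (p [hd w]) - p w * ln (path_weight R w))"
    unfolding rel_entropy_def
  proof (intro sum.cong refl)
    fix w :: "'s list"
    assume "w \<in> words (Suc k)"
    then obtain z v where w: "w = z # v"
      by (cases w) auto
    show "p w * ln (p w / (p [hd w] * path_weight R w))
        = p w * ln (p w) - p w * ln (p [hd w]) - p w * ln (path_weight R w)"
    proof (cases "p w = 0")
      case False
      with nonneg[of w] have "0 < p w"
        by simp
      moreover from this have "0 < p [hd w]" "0 < path_weight R w"
        using w pos_imp_hd_pos supported by auto
      ultimately show ?thesis
        by (simp add: ln_div ln_mult algebra_simps)
    qed simp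
  qed
  then show ?thesis
    by (simp add: sum_subtractf negentropy_def sum_ln_path_weight hd_term)
qed

lemma rel_entropy_0: "rel_entropy 0 = 0"
  by (auto simp: rel_entropy_def sum_words_1 intro!: sum.neutral)

lemma pos_imp_factors_pos:
  assumes "0 < p (u @ z # v)"
  shows "0 < p (u @ [z])" "0 < path_weight R (u @ [z])" "0 < path_weight R (z # v)"
proof -
  show "0 < p (u @ [z])"
    using assms le_prefix[of "u @ [z]" v] by simp
  have "0 < path_weight R (u @ [z]) * path_weight R (z # v)"
    using supported[OF assms] by (simp only: path_weight_append[of R u z v])
  then show "0 < path_weight R (u @ [z])" "0 < path_weight R (z # v)"
    using path_weight_nonneg[of "u @ [z]"] path_weight_nonneg[of "z # v"]
    by (auto simp: zero_less_mult_iff)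
qed

lemma rel_entropy_add_eq:
  "rel_entropy (a + b) = rel_entropy a + (\<Sum>z\<in>UNIV. \<Sum>v\<in>words b. \<Sum>u\<in>words a.
     p (u @ z # v) * ln (p (u @ z # v) / (p (u @ [z]) * path_weight R (z # v))))"
proof -
  define head where "head u z = ln (p (u @ [z]) / (p [hd (u @ [z])] * path_weight R (u @ [z])))"
    for u z
  define tail where "tail u z v = ln (p (u @ z # v) / (p (u @ [z]) * path_weight R (z # v)))"
    for u z v
  have chain_rule: "p (u @ z # v) * ln (p (u @ z # v)
        / (p [hd (u @ z # v)] * path_weight R (u @ z # v)))
      = p (u @ z # v) * head u z + p (u @ z # v) * tail u z v" for u z v
  proof (cases "p (u @ z # v) = 0")
    case False
    with nonneg have W: "0 < p (u @ z # v)"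
      by (simp add: order_less_le)
    have "0 < p [hd (u @ [z])]"
      using pos_imp_factors_pos(1)[OF W] pos_imp_hd_pos[of "hd (u @ [z])" "tl (u @ [z])"] by simp
    with W pos_imp_factors_pos[OF W]
    have "ln (p (u @ z # v) / (p [hd (u @ [z])] * (path_weight R (u @ [z]) * path_weight R (z # v))))
        = head u z + tail u z v"
      by (simp add: head_def tail_def ln_div ln_mult zero_less_mult_iff)
    moreover have "hd (u @ z # v) = hd (u @ [z])"
      by (cases u) simp_all
    ultimately show ?thesis
      by (simp add: path_weight_append[of R u z v] distrib_left)
  qed (simp add: head_def tail_def)
  have "rel_entropy (a + b) = (\<Sum>u\<in>words a. \<Sum>z\<in>UNIV. \<Sum>v\<in>words b. p (u @ z # v) * head u z)
      + (\<Sum>u\<in>words a. \<Sum>z\<in>UNIV. \<Sum>v\<in>words b. p (u @ z # v) * tail u z v)"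
    unfolding rel_entropy_def add_Suc_right[symmetric] sum_words_add sum_words_Suc chain_rule
    by (simp only: sum.distrib)
  also have "(\<Sum>u\<in>words a. \<Sum>z\<in>UNIV. \<Sum>v\<in>words b. p (u @ z # v) * head u z)
      = (\<Sum>u\<in>words a. \<Sum>z\<in>UNIV. (\<Sum>v\<in>words b. p ((u @ [z]) @ v)) * head u z)"
    by (simp add: sum_distrib_right)
  also have "\<dots> = rel_entropy a"
    by (simp only: sum_append_words rel_entropy_def sum_words_Suc_snoc head_def)
  also have "(\<Sum>u\<in>words a. \<Sum>z\<in>UNIV. \<Sum>v\<in>words b. p (u @ z # v) * tail u z v)
      = (\<Sum>z\<in>UNIV. \<Sum>v\<in>words b. \<Sum>u\<in>words a. p (u @ z # v) * tail u z v)"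
    by (subst sum.swap) (rule sum.cong[OF refl], rule sum.swap)
  finally show ?thesis
    by (simp only: tail_def)
qed

lemma rel_entropy_le_tail:
  "rel_entropy b \<le> (\<Sum>z\<in>UNIV. \<Sum>v\<in>words b. \<Sum>u\<in>words a.
     p (u @ z # v) * ln (p (u @ z # v) / (p (u @ [z]) * path_weight R (z # v))))"
  unfolding rel_entropy_def sum_words_Suc
proof (intro sum_mono)
  fix z v
  have "(\<Sum>u\<in>words a. p (u @ z # v))
        * ln ((\<Sum>u\<in>words a. p (u @ z # v)) / (\<Sum>u\<in>words a. p (u @ [z]) * path_weight R (z # v)))
      \<le> (\<Sum>u\<in>words a. p (u @ z # v) * ln (p (u @ z # v) / (p (u @ [z]) * path_weight R (z # v))))"
  proof (rule log_sum_inequality)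
    show "0 < p (u @ [z]) * path_weight R (z # v)" if "0 < p (u @ z # v)" for u
      using pos_imp_factors_pos[OF that] by simp
  qed (simp_all add: nonneg path_weight_nonneg)
  moreover have "(\<Sum>u\<in>words a. p (u @ [z]) * path_weight R (z # v)) = p [z] * path_weight R (z # v)"
    by (simp only: sum_prepend_words flip: sum_distrib_right)
  ultimately show "p (z # v) * ln (p (z # v) / (p [hd (z # v)] * path_weight R (z # v)))
      \<le> (\<Sum>u\<in>words a. p (u @ z # v) * ln (p (u @ z # v) / (p (u @ [z]) * path_weight R (z # v))))"
    by (simp only: sum_prepend_words list.sel)
qed

lemma rel_entropy_superadditive: "rel_entropy a + rel_entropy b \<le> rel_entropy (a + b)"
  using rel_entropy_add_eq[of a b] rel_entropy_le_tail[of b a] by simp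

lemma rel_entropy_mult: "real j * rel_entropy k \<le> rel_entropy (j * k)"
proof (induction j)
  case (Suc j)
  then show ?case
    using rel_entropy_superadditive[of "j * k" k] by (simp add: algebra_simps)
qed (simp add: rel_entropy_0)

lemma rel_entropy_nonpos_if_bounded:
  assumes "\<And>k. rel_entropy k \<le> C"
  shows "rel_entropy k \<le> 0"
proof (rule ccontr)
  assume "\<not> rel_entropy k \<le> 0"
  moreover obtain j :: nat where "C / rel_entropy k < real j"
    using reals_Archimedean2 by blast
  ultimately have "C < real j * rel_entropy k"
    by (simp add: field_simps)
  also have "\<dots> \<le> rel_entropy (j * k)"
    by (rule rel_entropy_mult)
  finally show False
    using assms[of "j * k"] by simp
qed

text \<open>Equality case of Gibbs' inequality.\<close>
lemma markov_if_rel_entropy_nonpos: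
  assumes "rel_entropy (length v) \<le> 0"
  shows "p (z # v) = p [z] * path_weight R (z # v)"
proof -
  define q where "q z v = p [z] * path_weight R (z # v)" for z v
  define gap where "gap z v = p (z # v) * ln (p (z # v) / q z v) - (p (z # v) - q z v)" for z v
  have q_nonneg: "0 \<le> q z v" for z v
    by (simp add: q_def nonneg path_weight_nonneg)
  have q_pos: "0 < q z v" if "0 < p (z # v)" for z v
    unfolding q_def using pos_imp_hd_pos[OF that] supported[OF that] by simp
  have gap_nonneg: "0 \<le> gap z v" for z v
    using mult_ln_div_ge_diff[OF nonneg q_nonneg q_pos] by (simp add: gap_def)
  have "(\<Sum>v\<in>words k. p (z # v) - q z v) = 0" for z k
    using sum_append_words[of "[z]" k]
    by (simp add: q_def sum_subtractf sum_path_weight flip: sum_distrib_left)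
  then have "(\<Sum>z\<in>UNIV. \<Sum>v\<in>words (length v). gap z v) = rel_entropy (length v)"
    by (simp add: gap_def rel_entropy_def sum_words_Suc sum_subtractf q_def)
  moreover have "0 \<le> (\<Sum>z\<in>UNIV. \<Sum>v\<in>words (length v). gap z v)"
    by (intro sum_nonneg gap_nonneg)
  ultimately have "(\<Sum>z\<in>UNIV. \<Sum>v\<in>words (length v). gap z v) = 0"
    using assms by linarith
  then have "gap z v = 0"
    using gap_nonneg by (simp add: sum_nonneg sum_nonneg_eq_0_iff)
  then have "p (z # v) * ln (p (z # v) / q z v) = p (z # v) - q z v"
    by (simp add: gap_def)
  then have "p (z # v) = q z v"
    by (rule mult_ln_div_eq_diff_imp_eq[OF nonneg q_nonneg q_pos, rotated])
  then show ?thesis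
    by (simp add: q_def)
qed

lemma markov_if_rel_entropy_bounded:
  assumes "\<And>k. rel_entropy k \<le> C"
  shows "p (z # v) = p [z] * path_weight R (z # v)"
  using markov_if_rel_entropy_nonpos rel_entropy_nonpos_if_bounded[OF assms] by blast

end

definition markov_law :: "('s \<Rightarrow> real) \<Rightarrow> ('s \<Rightarrow> 's \<Rightarrow> real) \<Rightarrow> 's list \<Rightarrow> real" where
  "markov_law \<pi> R w = (case w of [] \<Rightarrow> 1 | z # _ \<Rightarrow> \<pi> z * path_weight R w)"

lemma markov_law_Nil [simp]: "markov_law \<pi> R [] = 1"
  and markov_law_Cons [simp]: "markov_law \<pi> R (z # v) = \<pi> z * path_weight R (z # v)"
  by (simp_all add: markov_law_def)

lemma markov_law_map_upt:
  "markov_law \<pi> R (map g [0..<Suc n]) = \<pi> (g 0) * path_weight R (map g [0..<Suc n])"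
  by (simp add: upt_conv_Cons del: upt_Suc)

locale stationary_markov_chain = markov_kernel R
  for R :: "'s::finite \<Rightarrow> 's \<Rightarrow> real" +
  fixes \<pi> :: "'s \<Rightarrow> real"
  assumes invariant: "invariant_prob R \<pi>"
begin

lemma init_nonneg: "0 \<le> \<pi> z"
  and init_sum: "(\<Sum>z\<in>UNIV. \<pi> z) = 1"
  and init_invariant: "(\<Sum>z\<in>UNIV. \<pi> z * R z z') = \<pi> z'"
  using invariant by (simp_all add: invariant_prob_def)

lemma markov_law_snoc:
  "markov_law \<pi> R (w @ [z, z']) = markov_law \<pi> R (w @ [z]) * R z z'"
  by (cases w) (simp_all add: path_weight_snoc[of R "_ # _", simplified])

lemma law_on_paths_markov_law: "law_on_paths R (markov_law \<pi> R)"
proof unfold_locales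
  show "0 \<le> markov_law \<pi> R w" for w
    by (cases w) (simp_all add: init_nonneg path_weight_nonneg)
  show "(\<Sum>z\<in>UNIV. markov_law \<pi> R (w @ [z])) = markov_law \<pi> R w" for w
  proof (cases w rule: rev_cases)
    case (snoc u z0)
    then show ?thesis
      using markov_law_snoc[of u z0] by (simp add: row_sum flip: sum_distrib_left)
  qed (simp add: init_sum)
  show "(\<Sum>z\<in>UNIV. markov_law \<pi> R (z # w)) = markov_law \<pi> R w" for w
  proof (cases w)
    case (Cons z' v)
    have "(\<Sum>z\<in>UNIV. \<pi> z * (R z z' * path_weight R (z' # v)))
        = (\<Sum>z\<in>UNIV. \<pi> z * R z z') * path_weight R (z' # v)"
      by (simp add: sum_distrib_right mult.assoc)
    with Cons show ?thesis
      by (simp add: init_invariant)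
  qed (simp add: init_sum)
  show "0 < path_weight R w" if "0 < markov_law \<pi> R w" for w
  proof (cases w)
    case (Cons z v)
    with that init_nonneg[of z] path_weight_nonneg[of w] show ?thesis
      by (auto simp: zero_less_mult_iff)
  qed simp
qed simp

sublocale chain: law_on_paths R "markov_law \<pi> R"
  by (rule law_on_paths_markov_law)

lemma rel_entropy_markov_law: "chain.rel_entropy k = 0"
  unfolding chain.rel_entropy_def sum_words_Suc
  by (intro sum.neutral ballI) simp

lemma negentropy_markov_law:
  "negentropy (markov_law \<pi> R) (Suc k)
     = negentropy (markov_law \<pi> R) (Suc 0) + real k * chain.mean_log_kernel"
  using chain.rel_entropy_eq[of k] by (simp add: rel_entropy_markov_law)

end

lemma sum_PiE_eq_sum_words:
  fixes G :: "'s::finite list \<Rightarrow> 'b::comm_monoid_add"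
  shows "(\<Sum>w\<in>PiE {..m} (\<lambda>_. UNIV). G (map w [0..<Suc m])) = (\<Sum>v\<in>words (Suc m). G v)"
proof -
  have "bij_betw (\<lambda>w. map w [0..<Suc m]) (PiE {..m} (\<lambda>_. UNIV)) (words (Suc m))"
  proof (rule bij_betw_byWitness[where f' = "\<lambda>v. restrict (\<lambda>i. v ! i) {..m}"])
    show "\<forall>w\<in>PiE {..m} (\<lambda>_. UNIV). restrict (\<lambda>i. map w [0..<Suc m] ! i) {..m} = w"
      by (auto simp: PiE_iff restrict_def fun_eq_iff nth_map_upt simp del: upt_Suc)
    show "\<forall>v\<in>words (Suc m). map (restrict (\<lambda>i. v ! i) {..m}) [0..<Suc m] = v"
      by (auto intro!: nth_equalityI simp del: upt_Suc)
    show "(\<lambda>w. map w [0..<Suc m]) ` PiE {..m} (\<lambda>_. UNIV) \<subseteq> words (Suc m)"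
      by (auto simp del: upt_Suc)
    show "(\<lambda>v. restrict (\<lambda>i. v ! i) {..m}) ` words (Suc m) \<subseteq> PiE {..m} (\<lambda>_. UNIV)"
      by (simp add: image_subset_iff restrict_PiE_iff)
  qed
  then show ?thesis
    using sum.reindex_bij_betw by blast
qed

lemma markov_expect2_eq_sum_words:
  fixes R :: "'s::finite \<Rightarrow> 's \<Rightarrow> real"
  assumes "i \<le> m" "j \<le> m"
  shows "markov_expect2 \<pi> R m i j g = (\<Sum>v\<in>words (Suc m). markov_law \<pi> R v * g (v ! i) (v ! j))"
proof -
  have "markov_law \<pi> R (map w [0..<Suc m]) = \<pi> (w 0) * (\<Prod>k<m. R (w k) (w (Suc k)))" for w :: "nat \<Rightarrow> 's"
    using path_weight_map_upt[of R w 0 m] by (simp add: markov_law_map_upt del: upt_Suc)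
  moreover have "map w [0..<Suc m] ! i = w i" "map w [0..<Suc m] ! j = w j" for w :: "nat \<Rightarrow> 's"
    using assms by (simp_all del: upt_Suc)
  ultimately show ?thesis
    unfolding markov_expect2_def sum_PiE_eq_sum_words[symmetric] by (simp del: upt_Suc)
qed

section \<open>Lagged processes\<close>

definition lag :: "nat \<Rightarrow> ('a \<times> 'b) list \<Rightarrow> ('a \<times> 'b) list" where
  "lag T v = zip (map fst v) (drop T (map snd v))"

lemma length_lag [simp]: "length (lag T v) = length v - T"
  by (simp add: lag_def)

lemma nth_lag: "k < length v - T \<Longrightarrow> lag T v ! k = (fst (v ! k), snd (v ! (T + k)))"
  by (simp add: lag_def)

lemma map_fst_lag: "map fst (lag T v) = take (length v - T) (map fst v)"
  by (simp add: lag_def map_fst_zip_take min_def)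

lemma map_snd_lag: "map snd (lag T v) = drop T (map snd v)"
  by (simp add: lag_def map_snd_zip_take)

lemma lag_butlast: "lag T (butlast v) = butlast (lag T v)"
  by (rule nth_equalityI) (auto simp: nth_lag nth_butlast)

lemma lag_tl: "lag T (tl v) = tl (lag T v)"
  by (rule nth_equalityI) (auto simp: nth_lag nth_tl)

lemma lag_map_upt:
  "lag T (map g [0..<n + T]) = map (\<lambda>k. (fst (g k), snd (g (T + k)))) [0..<n]"
  by (rule nth_equalityI) (auto simp: nth_lag)

text \<open>The law of the process \<open>(X\<^sub>k, Y\<^sub>k\<^sub>+\<^sub>T)\<close> when \<open>p\<close> is the law of \<open>(X\<^sub>k, Y\<^sub>k)\<close>.\<close>
definition lagged_law :: "nat \<Rightarrow> (('a \<times> 'b) list \<Rightarrow> real) \<Rightarrow> ('a \<times> 'b) list \<Rightarrow> real" where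
  "lagged_law T p u = (\<Sum>v\<in>words (length u + T). of_bool (lag T v = u) * p v)"

lemma sum_lagged_law:
  fixes p :: "('a::finite \<times> 'b::finite) list \<Rightarrow> real"
  shows "(\<Sum>u\<in>words n. lagged_law T p u * h u) = (\<Sum>v\<in>words (n + T). p v * h (lag T v))"
proof -
  have "(\<Sum>u\<in>words n. lagged_law T p u * h u)
      = (\<Sum>v\<in>words (n + T). \<Sum>u\<in>words n. if lag T v = u then p v * h u else 0)"
    unfolding lagged_law_def sum_distrib_right
    by (subst sum.swap) (auto intro!: sum.cong)
  also have "\<dots> = (\<Sum>v\<in>words (n + T). p v * h (lag T v))"
    by simp
  finally show ?thesis .
qed

lemma lagged_law_ge:
  fixes p :: "('a::finite \<times> 'b::finite) list \<Rightarrow> real"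
  assumes "T \<le> length v" "\<And>w. 0 \<le> p w"
  shows "p v \<le> lagged_law T p (lag T v)"
  unfolding lagged_law_def using assms
  by (intro member_le_sum[of v, where f = "\<lambda>w. of_bool (lag T w = lag T v) * p w", simplified]) auto

lemma sum_words_mult_of_bool_eq:
  fixes F :: "'a::finite list \<Rightarrow> real"
  assumes "length u = n"
  shows "(\<Sum>v\<in>words n. F v * of_bool (v = u)) = F u"
  using assms by (subst sum.remove[of _ u]) auto

lemma sum_words_Suc_butlast:
  fixes g :: "'a::finite list \<Rightarrow> real"
  assumes "length u = n"
  shows "(\<Sum>w\<in>words (Suc n). g w * of_bool (butlast w = u)) = (\<Sum>z\<in>UNIV. g (u @ [z]))"
proof -
  have "(\<Sum>w\<in>words (Suc n). g w * of_bool (butlast w = u))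
      = (\<Sum>v\<in>words n. (\<Sum>z\<in>UNIV. g (v @ [z])) * of_bool (v = u))"
    by (simp only: sum_words_Suc_snoc butlast_snoc sum_distrib_right)
  with assms show ?thesis
    by (simp only: sum_words_mult_of_bool_eq)
qed

lemma sum_words_Suc_tl:
  fixes g :: "'a::finite list \<Rightarrow> real"
  assumes "length u = n"
  shows "(\<Sum>w\<in>words (Suc n). g w * of_bool (tl w = u)) = (\<Sum>z\<in>UNIV. g (z # u))"
proof -
  have "(\<Sum>w\<in>words (Suc n). g w * of_bool (tl w = u))
      = (\<Sum>v\<in>words n. (\<Sum>z\<in>UNIV. g (z # v)) * of_bool (v = u))"
    by (simp only: sum_words_Suc list.sel sum_distrib_right) (rule sum.swap)
  with assms show ?thesis
    by (simp only: sum_words_mult_of_bool_eq)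
qed

lemma stationary_lagged_law:
  fixes p :: "('a::finite \<times> 'b::finite) list \<Rightarrow> real"
  assumes "stationary_law p"
  shows "stationary_law (lagged_law T p)"
proof -
  interpret stationary_law p
    by fact
  let ?q = "lagged_law T p"
  show ?thesis
  proof
    show "?q [] = 1"
      by (simp add: lagged_law_def lag_def sum_words)
    show "0 \<le> ?q w" for w
      by (simp add: lagged_law_def sum_nonneg nonneg)
    show "(\<Sum>z\<in>UNIV. ?q (u @ [z])) = ?q u" for u
    proof -
      have "(\<Sum>z\<in>UNIV. ?q (u @ [z]))
          = (\<Sum>v\<in>words (Suc (length u + T)). p v * of_bool (lag T (butlast v) = u))"
        by (simp only: sum_words_Suc_butlast[symmetric] sum_lagged_law lag_butlast add_Suc)
      also have "\<dots> = (\<Sum>v\<in>words (length u + T).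
          (\<Sum>z\<in>UNIV. p (v @ [z])) * of_bool (lag T v = u))"
        by (simp only: sum_words_Suc_snoc sum_distrib_right butlast_snoc)
      finally show ?thesis
        by (simp only: sum_snoc lagged_law_def mult.commute)
    qed
    show "(\<Sum>z\<in>UNIV. ?q (z # u)) = ?q u" for u
    proof -
      have "(\<Sum>z\<in>UNIV. ?q (z # u))
          = (\<Sum>v\<in>words (Suc (length u + T)). p v * of_bool (lag T (tl v) = u))"
        by (simp only: sum_words_Suc_tl[symmetric] sum_lagged_law lag_tl add_Suc)
      also have "\<dots> = (\<Sum>v\<in>words (length u + T).
          (\<Sum>z\<in>UNIV. p (z # v)) * of_bool (lag T v = u))"
        by (simp only: sum_words_Suc sum_distrib_right list.sel) (rule sum.swap)
      finally show ?thesis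
        by (simp only: sum_Cons lagged_law_def mult.commute)
    qed
  qed
qed

context
  fixes p :: "('a::finite \<times> 'b::finite) list \<Rightarrow> real"
  assumes stationary: "stationary_law p"
begin

interpretation stationary_law p
  by (fact stationary)

lemma lagged_law_fst_marginal:
  "(\<Sum>u\<in>words n. lagged_law T p u * h (map fst u)) = (\<Sum>u\<in>words n. p u * h (map fst u))"
proof -
  have "(\<Sum>u\<in>words n. lagged_law T p u * h (map fst u))
      = (\<Sum>v\<in>words (0 + n + T). p v * h (map fst (take n (drop 0 v))))"
    by (simp add: sum_lagged_law map_fst_lag take_map)
  also have "\<dots> = (\<Sum>u\<in>words n. p u * h (map fst u))"
    by (rule sum_window)
  finally show ?thesis .
qed

lemma lagged_law_snd_marginal:
  "(\<Sum>u\<in>words n. lagged_law T p u * h (map snd u)) = (\<Sum>u\<in>words n. p u * h (map snd u))"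
proof -
  have "(\<Sum>u\<in>words n. lagged_law T p u * h (map snd u))
      = (\<Sum>v\<in>words (T + n + 0). p v * h (map snd (take n (drop T v))))"
    by (simp add: sum_lagged_law map_snd_lag drop_map add.commute)
  also have "\<dots> = (\<Sum>u\<in>words n. p u * h (map snd u))"
    by (rule sum_window)
  finally show ?thesis .
qed

lemma card_lag_fiber:
  fixes u :: "('a \<times> 'b) list"
  assumes "length u = n"
  shows "card {v \<in> words (n + T). lag T v = u} \<le> card (UNIV :: ('a \<times> 'b) set) ^ T"
proof -
  let ?F = "{v \<in> words (n + T). lag T v = u}"
  let ?cut = "\<lambda>v :: ('a \<times> 'b) list. (take T (map snd v), drop n (map fst v))"
  have "inj_on ?cut ?F"
  proof (rule inj_onI)
    fix v v'
    assume "v \<in> ?F" "v' \<in> ?F" "?cut v = ?cut v'"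
    then have "map fst (lag T v) = map fst (lag T v')" "map snd (lag T v) = map snd (lag T v')"
      and "take T (map snd v) = take T (map snd v')" "drop n (map fst v) = drop n (map fst v')"
      by auto
    moreover have "length v - T = n" "length v' - T = n"
      using \<open>v \<in> ?F\<close> \<open>v' \<in> ?F\<close> by auto
    ultimately have "map fst v = map fst v'" "map snd v = map snd v'"
      unfolding map_fst_lag map_snd_lag by (metis append_take_drop_id)+
    then show "v = v'"
      by (rule pair_list_eqI)
  qed
  moreover have "?cut ` ?F \<subseteq> words T \<times> words T"
    by auto
  ultimately have "card ?F \<le> card (words T \<times> words T :: ('b list \<times> 'a list) set)"
    by (intro card_inj_on_le) auto
  also have "\<dots> = card (UNIV :: ('a \<times> 'b) set) ^ T"
    by (simp add: card_cartesian_product card_words power_mult_distrib flip: UNIV_Times_UNIV)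
  finally show ?thesis .
qed

lemma sum_lagged_law_lag_le:
  "(\<Sum>v\<in>words (n + T). lagged_law T p (lag T v)) \<le> real (card (UNIV :: ('a \<times> 'b) set)) ^ T"
proof -
  define q where "q = lagged_law T p"
  define K where "K = real (card (UNIV :: ('a \<times> 'b) set))"
  interpret lagged: stationary_law q
    unfolding q_def by (rule stationary_lagged_law[OF stationary])
  have "(\<Sum>v\<in>words (n + T). q (lag T v))
      = (\<Sum>u\<in>words n. \<Sum>v\<in>{v \<in> words (n + T). lag T v = u}. q (lag T v))"
    by (rule sum.group[symmetric]) auto
  also have "\<dots> = (\<Sum>u\<in>words n. q u * card {v \<in> words (n + T). lag T v = u})"
    by (intro sum.cong refl) (simp add: mult.commute)
  also have "\<dots> \<le> (\<Sum>u\<in>words n. q u * K ^ T)"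
    using card_lag_fiber lagged.nonneg
    by (intro sum_mono mult_left_mono) (auto simp: K_def simp flip: of_nat_power)
  also have "\<dots> = K ^ T"
    by (simp add: lagged.sum_words flip: sum_distrib_right)
  finally show ?thesis
    by (simp add: q_def K_def)
qed

lemma negentropy_lagged_law_le:
  "negentropy (lagged_law T p) n \<le> negentropy p (n + T) + real T * ln (card (UNIV :: ('a \<times> 'b) set))"
proof -
  define q where "q = lagged_law T p"
  define K where "K = real (card (UNIV :: ('a \<times> 'b) set))"
  define B where "B = (\<Sum>v\<in>words (n + T). q (lag T v))"
  interpret lagged: stationary_law q
    unfolding q_def by (rule stationary_lagged_law[OF stationary])
  have ge: "p v \<le> q (lag T v)" if "v \<in> words (n + T)" for v
    using that nonneg unfolding q_def by (intro lagged_law_ge) auto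
  have "(\<Sum>v\<in>words (n + T). p v) \<le> B"
    unfolding B_def by (rule sum_mono) (rule ge)
  then have "1 \<le> B"
    by (simp add: sum_words)
  have "0 < K"
    by (simp add: K_def finite_UNIV_card_ge_0)
  have "B \<le> K ^ T"
    using sum_lagged_law_lag_le[where n = n and T = T] by (simp add: B_def q_def K_def)
  with \<open>1 \<le> B\<close> \<open>0 < K\<close> have "ln B \<le> ln (K ^ T)"
    by (subst ln_le_cancel_iff) auto
  with \<open>1 \<le> B\<close> \<open>0 < K\<close> have "- (real T * ln K) \<le> 1 * ln (1 / B)"
    by (simp add: ln_div ln_realpow)
  also have "\<dots> \<le> (\<Sum>v\<in>words (n + T). p v * ln (p v / q (lag T v)))"
  proof -
    have "(\<Sum>v\<in>words (n + T). p v) * ln ((\<Sum>v\<in>words (n + T). p v) / B)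
        \<le> (\<Sum>v\<in>words (n + T). p v * ln (p v / q (lag T v)))"
      unfolding B_def using ge
      by (intro log_sum_inequality) (auto simp: nonneg lagged.nonneg intro: less_le_trans)
    then show ?thesis
      by (simp add: sum_words)
  qed
  also have "\<dots> = negentropy p (n + T) - negentropy q n"
  proof -
    have "p v * ln (p v / q (lag T v)) = p v * ln (p v) - p v * ln (q (lag T v))"
      if "v \<in> words (n + T)" for v
      using ge[OF that] nonneg[of v] by (cases "p v = 0") (simp_all add: ln_div algebra_simps)
    then show ?thesis
      by (simp add: negentropy_def sum_subtractf q_def sum_lagged_law)
  qed
  finally show ?thesis
    by (simp add: q_def K_def)
qed

end

section \<open>The tilted product chain\<close>

lemma stochastic_doob:
  assumes "\<And>z z'. 0 \<le> A z z'" "\<And>z. 0 < r z" "\<And>z. (\<Sum>z'\<in>UNIV. A z z' * r z') = r z"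
  shows "stochastic (doob A r)"
proof -
  have "(\<Sum>z'\<in>UNIV. doob A r z z') = (\<Sum>z'\<in>UNIV. A z z' * r z') / r z" for z
    by (simp add: doob_def sum_divide_distrib algebra_simps)
  also have "\<dots> z = 1" for z
    using assms(2)[of z] by (simp add: assms(3))
  finally show ?thesis
    using assms(1,2) by (simp add: stochastic_def doob_def less_imp_le)
qed

lemma path_weight_doob:
  assumes "\<And>z. 0 < r z"
  shows "path_weight (doob A r) (map g [0..<Suc m])
    = (\<Prod>k<m. A (g k) (g (Suc k))) * r (g m) / r (g 0)"
proof -
  have "path_weight (doob A r) (map g [0..<Suc m])
      = (\<Prod>k<m. r (g (Suc k)) / r (g k)) * (\<Prod>k<m. A (g k) (g (Suc k)))"
    using path_weight_map_upt[of "doob A r" g 0 m] unfolding doob_def by (simp only: add_0 prod.distrib)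
  also have "(\<Prod>k<m. r (g (Suc k)) / r (g k)) = r (g m) / r (g 0)"
    using assms by (intro prod_lessThan_telescope) (simp add: less_imp_neq[symmetric])
  finally show ?thesis
    by simp
qed

locale tilted_product =
  fixes P Q :: "'e::finite \<Rightarrow> 'e \<Rightarrow> real" and f :: "'e \<times> 'e \<Rightarrow> int" and \<theta> :: real
    and r :: "'e \<times> 'e \<Rightarrow> real" and \<pi> :: "'e \<times> 'e \<Rightarrow> real"
  assumes P: "stochastic P" and Q: "stochastic Q"
    and r_pos: "\<And>z. 0 < r z"
    and r_eigen: "\<And>z. (\<Sum>z'\<in>UNIV. Phi P Q f \<theta> z z' * r z') = r z"
    and invariant_doob: "invariant_prob (doob (Phi P Q f \<theta>) r) \<pi>"
begin

abbreviation R :: "'e \<times> 'e \<Rightarrow> 'e \<times> 'e \<Rightarrow> real" where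
  "R \<equiv> doob (Phi P Q f \<theta>) r"

lemma Phi_eq: "Phi P Q f \<theta> z z' = exp (\<theta> * of_int (f z')) * P (fst z) (fst z') * Q (snd z) (snd z')"
  by (simp add: Phi_def case_prod_unfold)

lemma P_nonneg: "0 \<le> P x x'" and Q_nonneg: "0 \<le> Q y y'"
  using P Q by (simp_all add: stochastic_def)

lemma R_pos_iff: "0 < R z z' \<longleftrightarrow> 0 < P (fst z) (fst z') \<and> 0 < Q (snd z) (snd z')"
proof -
  define c where "c = r z' / r z * exp (\<theta> * of_int (f z'))"
  have "R z z' = c * (P (fst z) (fst z') * Q (snd z) (snd z'))"
    by (simp add: c_def doob_def Phi_eq)
  moreover have "0 < c"
    using r_pos[of z] r_pos[of z'] by (simp add: c_def)
  ultimately show ?thesis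
    using P_nonneg[of "fst z" "fst z'"] Q_nonneg[of "snd z" "snd z'"]
    by (simp add: zero_less_mult_iff)
qed

sublocale stationary_markov_chain R \<pi>
proof
  show "stochastic R"
    using r_pos r_eigen by (intro stochastic_doob) (simp_all add: Phi_eq P_nonneg Q_nonneg)
qed (fact invariant_doob)

definition mean_f :: "(('e \<times> 'e) list \<Rightarrow> real) \<Rightarrow> real" where
  "mean_f p = (\<Sum>z\<in>UNIV. p [z] * of_int (f z))"

lemma mean_log_kernel_eq:
  assumes "law_on_paths R p"
  shows "law_on_paths.mean_log_kernel R p = \<theta> * mean_f p
    + (\<Sum>u\<in>words 2. p u * ln (P (map fst u ! 0) (map fst u ! 1)))
    + (\<Sum>u\<in>words 2. p u * ln (Q (map snd u ! 0) (map snd u ! 1)))"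
proof -
  interpret law_on_paths R p
    by fact
  have ln_R: "p [z, z'] * ln (R z z') = p [z, z'] * ln (r z') - p [z, z'] * ln (r z)
      + \<theta> * (p [z, z'] * of_int (f z')) + p [z, z'] * ln (P (fst z) (fst z'))
      + p [z, z'] * ln (Q (snd z) (snd z'))" for z z'
  proof (cases "p [z, z'] = 0")
    case False
    with nonneg[of "[z, z']"] supported[of "[z, z']"] have "0 < R z z'"
      by simp
    then have "0 < P (fst z) (fst z')" "0 < Q (snd z) (snd z')"
      by (simp_all add: R_pos_iff)
    with r_pos[of z] r_pos[of z'] show ?thesis
      by (simp add: doob_def Phi_eq ln_mult ln_div algebra_simps)
  qed simp
  have "(\<Sum>z'\<in>UNIV. p [z, z']) = p [z]" for z
    using sum_snoc[of "[z]"] by simp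
  moreover have "(\<Sum>z\<in>UNIV. p [z, z']) = p [z']" for z'
    using sum_Cons[of "[z']"] .
  ultimately have "(\<Sum>z\<in>UNIV. \<Sum>z'\<in>UNIV. p [z, z'] * ln (r z'))
      = (\<Sum>z\<in>UNIV. \<Sum>z'\<in>UNIV. p [z, z'] * ln (r z))"
    and "(\<Sum>z\<in>UNIV. \<Sum>z'\<in>UNIV. p [z, z'] * of_int (f z')) = mean_f p"
    by (subst sum.swap; simp add: mean_f_def flip: sum_distrib_right)+
  then show ?thesis
    unfolding mean_log_kernel_def ln_R sum_words_2
    by (simp add: sum.distrib sum_subtractf flip: sum_distrib_left)
qed

lemma law_on_paths_lagged: "law_on_paths R (lagged_law T (markov_law \<pi> R))"
proof (intro law_on_paths.intro law_on_paths_axioms.intro)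
  show "markov_kernel R"
    by (fact markov_kernel_axioms)
  show "stationary_law (lagged_law T (markov_law \<pi> R))"
    by (intro stationary_lagged_law chain.stationary_law_axioms)
  fix u
  assume "0 < lagged_law T (markov_law \<pi> R) u"
  then obtain v where "length v = length u + T" "0 < of_bool (lag T v = u) * markov_law \<pi> R v"
    unfolding lagged_law_def by (auto dest: sum_pos_imp_ex_pos)
  then have v: "length v = length u + T" "lag T v = u" "0 < markov_law \<pi> R v"
    by (auto split: split_of_bool_asm)
  then have "0 < path_weight R v"
    by (intro chain.supported)
  then have step: "0 < R (v ! k) (v ! Suc k)" if "Suc k < length v" for k
    using that by (simp add: path_weight_pos_iff)
  show "0 < path_weight R u"
    unfolding path_weight_pos_iff
  proof (intro allI impI)
    fix k
    assume "Suc k < length u"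
    with v have "u ! k = (fst (v ! k), snd (v ! (T + k)))"
      "u ! Suc k = (fst (v ! Suc k), snd (v ! Suc (T + k)))"
      by (auto simp: nth_lag)
    moreover have "Suc k < length v" "Suc (T + k) < length v"
      using \<open>Suc k < length u\<close> v(1) by simp_all
    ultimately show "0 < R (u ! k) (u ! Suc k)"
      using step by (simp add: R_pos_iff)
  qed
qed

lemma mean_log_kernel_lagged_diff:
  "law_on_paths.mean_log_kernel R (lagged_law T (markov_law \<pi> R)) - chain.mean_log_kernel
    = \<theta> * (mean_f (lagged_law T (markov_law \<pi> R)) - mean_f (markov_law \<pi> R))"
proof -
  define q where "q = lagged_law T (markov_law \<pi> R)"
  have P_pairs: "(\<Sum>u\<in>words 2. q u * ln (P (map fst u ! 0) (map fst u ! 1)))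
      = (\<Sum>u\<in>words 2. markov_law \<pi> R u * ln (P (map fst u ! 0) (map fst u ! 1)))"
    unfolding q_def by (rule lagged_law_fst_marginal[OF chain.stationary_law_axioms])
  have Q_pairs: "(\<Sum>u\<in>words 2. q u * ln (Q (map snd u ! 0) (map snd u ! 1)))
      = (\<Sum>u\<in>words 2. markov_law \<pi> R u * ln (Q (map snd u ! 0) (map snd u ! 1)))"
    unfolding q_def by (rule lagged_law_snd_marginal[OF chain.stationary_law_axioms])
  show ?thesis
    unfolding q_def[symmetric] mean_log_kernel_eq[OF law_on_paths_lagged[of T, folded q_def]]
      mean_log_kernel_eq[OF law_on_paths_markov_law] P_pairs Q_pairs
    by (simp add: algebra_simps)
qed

lemma lagged_law_markov_if_mean_ge:
  assumes "0 \<le> \<theta>" "mean_f (markov_law \<pi> R) \<le> mean_f (lagged_law T (markov_law \<pi> R))"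
  shows "lagged_law T (markov_law \<pi> R) (z # v)
    = lagged_law T (markov_law \<pi> R) [z] * path_weight R (z # v)"
proof -
  define q where "q = lagged_law T (markov_law \<pi> R)"
  interpret lagged: law_on_paths R q
    unfolding q_def by (rule law_on_paths_lagged)
  have "0 \<le> \<theta> * (mean_f q - mean_f (markov_law \<pi> R))"
    using assms unfolding q_def by simp
  then have gain: "chain.mean_log_kernel \<le> lagged.mean_log_kernel"
    using mean_log_kernel_lagged_diff[of T] unfolding q_def by linarith
  define C where "C = negentropy (markov_law \<pi> R) (Suc 0) + real T * chain.mean_log_kernel
    + real T * ln (card (UNIV :: ('e \<times> 'e) set)) - negentropy q (Suc 0)"
  have "lagged.rel_entropy k \<le> C" for k
  proof -
    have "negentropy q (Suc k) \<le> negentropy (markov_law \<pi> R) (Suc k + T)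
        + real T * ln (card (UNIV :: ('e \<times> 'e) set))"
      unfolding q_def by (rule negentropy_lagged_law_le[OF chain.stationary_law_axioms])
    moreover have "real k * chain.mean_log_kernel \<le> real k * lagged.mean_log_kernel"
      using gain by (simp add: mult_left_mono)
    ultimately show ?thesis
      using negentropy_markov_law[of "k + T"]
      by (simp add: lagged.rel_entropy_eq C_def algebra_simps)
  qed
  then show ?thesis
    unfolding q_def[symmetric] by (rule lagged.markov_if_rel_entropy_bounded)
qed

end

section \<open>Primitive matrices\<close>

text \<open>The least positive element of \<open>D\<close> divides every element of \<open>S\<close>.\<close>
lemma one_mem_int_subgroup:
  fixes D :: "int set" and S :: "nat set"
  assumes add: "\<And>x y. x \<in> D \<Longrightarrow> y \<in> D \<Longrightarrow> x + y \<in> D"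
    and uminus: "\<And>x. x \<in> D \<Longrightarrow> - x \<in> D" and "0 \<in> D"
    and S: "\<And>a. a \<in> S \<Longrightarrow> int a \<in> D" and "0 \<notin> S" and "Gcd S = 1"
  shows "1 \<in> D"
proof -
  have mult: "int k * x \<in> D" if "x \<in> D" for k x
  proof (induction k)
    case (Suc k)
    then show ?case
      using add[OF Suc that] by (simp add: algebra_simps)
  qed (simp add: \<open>0 \<in> D\<close>)
  obtain a0 where "a0 \<in> S"
    using \<open>Gcd S = 1\<close> by fastforce
  with \<open>0 \<notin> S\<close> have "0 < a0"
    by (cases a0) auto
  define d where "d = (LEAST n. 0 < n \<and> int n \<in> D)"
  have d: "0 < d" "int d \<in> D"
    using LeastI[of "\<lambda>n. 0 < n \<and> int n \<in> D" a0] \<open>0 < a0\<close> S[OF \<open>a0 \<in> S\<close>]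
    by (simp_all add: d_def)
  have "d dvd a" if "a \<in> S" for a
  proof -
    have "int a = int (a div d) * int d + int (a mod d)"
      by (metis div_mult_mod_eq of_nat_add of_nat_mult)
    then have "int (a mod d) = int a + int (a div d) * (- int d)"
      by simp
    then have "int (a mod d) \<in> D"
      using add[OF S[OF that] mult[OF uminus[OF d(2)]]] by simp
    moreover have "a mod d < d"
      using d(1) by simp
    ultimately have "a mod d = 0"
      using not_less_Least[of "a mod d" "\<lambda>n. 0 < n \<and> int n \<in> D"] by (auto simp: d_def)
    then show ?thesis
      by (simp add: dvd_eq_mod_eq_0)
  qed
  then have "d = 1"
    using \<open>Gcd S = 1\<close> Gcd_greatest[of S d] by simp
  with d(2) show ?thesis
    by simp
qed

lemma additive_set_has_consecutive:
  fixes S :: "nat set"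
  assumes add: "\<And>a b. a \<in> S \<Longrightarrow> b \<in> S \<Longrightarrow> a + b \<in> S" and "0 \<notin> S" and "Gcd S = 1"
  shows "\<exists>q. q \<in> S \<and> Suc q \<in> S"
proof -
  define S0 where "S0 = insert 0 S"
  have add0: "a + b \<in> S0" if "a \<in> S0" "b \<in> S0" for a b
    using that add by (auto simp: S0_def)
  define D where "D = {int a - int b | a b. a \<in> S0 \<and> b \<in> S0}"
  have "1 \<in> D"
  proof (rule one_mem_int_subgroup[of D S])
    fix x y
    assume "x \<in> D" "y \<in> D"
    then obtain a b a' b' where "x = int a - int b" "y = int a' - int b'"
      and "a \<in> S0" "b \<in> S0" "a' \<in> S0" "b' \<in> S0"
      unfolding D_def by blast
    moreover from calculation have "x + y = int (a + a') - int (b + b')"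
      by simp
    ultimately show "x + y \<in> D"
      unfolding D_def using add0 by blast
  next
    fix x
    assume "x \<in> D"
    then obtain a b where "x = int a - int b" "a \<in> S0" "b \<in> S0"
      unfolding D_def by blast
    then show "- x \<in> D"
      unfolding D_def by force
  next
    show "0 \<in> D"
      unfolding D_def S0_def by force
  next
    show "int a \<in> D" if "a \<in> S" for a
      using that unfolding D_def S0_def by force
  qed (fact assms)+
  then obtain a b where "1 = int a - int b" "a \<in> S0" "b \<in> S0"
    unfolding D_def by auto
  then have "a = Suc b" "a \<in> S" "b \<in> S0"
    by (auto simp: S0_def)
  show ?thesis
  proof (cases "b = 0")
    case True
    with \<open>a = Suc b\<close> \<open>a \<in> S\<close> have "1 \<in> S"
      by simp
    then show ?thesis
      using add[of 1 1] by auto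
  next
    case False
    with \<open>b \<in> S0\<close> \<open>a = Suc b\<close> \<open>a \<in> S\<close> show ?thesis
      by (auto simp: S0_def)
  qed
qed

text \<open>Write \<open>n = (a - b) q + b (q + 1)\<close> with \<open>a = n div q\<close> and \<open>b = n mod q < q \<le> a\<close>.\<close>
lemma additive_set_contains_large:
  fixes S :: "nat set"
  assumes add: "\<And>a b. a \<in> S \<Longrightarrow> b \<in> S \<Longrightarrow> a + b \<in> S"
    and "q \<in> S" "Suc q \<in> S" "0 < q" "q * q \<le> n"
  shows "n \<in> S"
proof -
  have multiples: "k * x \<in> S" if "1 \<le> k" "x \<in> S" for k x
    using that(1)
  proof (induction k rule: dec_induct)
    case (step k)
    then show ?case
      using add[OF step.IH that(2)] by (simp add: algebra_simps)
  qed (use that in simp)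
  define a b where "a = n div q" and "b = n mod q"
  have "q \<le> a"
    using assms(4,5) by (simp add: a_def less_eq_div_iff_mult_less_eq)
  moreover have "b < q"
    using assms(4) by (simp add: b_def)
  ultimately have "b < a" "n = (a - b) * q + b * Suc q"
    by (auto simp: a_def b_def algebra_simps diff_mult_distrib)
  moreover have "(a - b) * q \<in> S"
    using \<open>b < a\<close> assms(2) by (intro multiples) auto
  ultimately show ?thesis
    using multiples[of b "Suc q"] add assms(3) by (cases "b = 0") auto
qed

lemma matpow_nonneg: "(\<And>x y. 0 \<le> A x y) \<Longrightarrow> 0 \<le> matpow A n x y"
  by (induction n arbitrary: y) (auto intro!: sum_nonneg mult_nonneg_nonneg)

lemma matpow_add: "matpow A (a + b) x z = (\<Sum>y\<in>UNIV. matpow A a x y * matpow A b y z)"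
proof (induction b arbitrary: z)
  case (Suc b)
  have "matpow A (a + Suc b) x z = (\<Sum>y\<in>UNIV. \<Sum>w\<in>UNIV. matpow A a x w * matpow A b w y * A y z)"
    by (simp add: Suc sum_distrib_right)
  also have "\<dots> = (\<Sum>w\<in>UNIV. matpow A a x w * matpow A (Suc b) w z)"
    by (subst sum.swap) (simp add: sum_distrib_left mult.assoc)
  finally show ?case .
qed (simp add: if_distrib[of "\<lambda>t. _ * t"] cong: if_cong)

lemma matpow_pos_add:
  assumes "\<And>x y. 0 \<le> A x y" "0 < matpow A a x y" "0 < matpow A b y z"
  shows "0 < matpow A (a + b) x z"
proof -
  have "0 < matpow A a x y * matpow A b y z"
    using assms(2,3) by simp
  also have "\<dots> \<le> (\<Sum>w\<in>UNIV. matpow A a x w * matpow A b w z)"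
    using assms(1) by (intro member_le_sum) (auto intro: mult_nonneg_nonneg matpow_nonneg)
  finally show ?thesis
    by (simp add: matpow_add)
qed

lemma primitive_matpow_pos:
  fixes A :: "'s::finite \<Rightarrow> 's \<Rightarrow> real"
  assumes "stochastic A" "irreducible_mat A" "aperiodic_mat A"
  shows "\<exists>N. \<forall>n\<ge>N. \<forall>x y. 0 < matpow A n x y"
proof -
  have nonneg: "\<And>x y. 0 \<le> A x y"
    using assms(1) by (simp add: stochastic_def)
  have "\<exists>N. \<forall>n\<ge>N. 0 < matpow A n x x" for x
  proof -
    let ?S = "{n. 1 \<le> n \<and> 0 < matpow A n x x}"
    have add: "a + b \<in> ?S" if "a \<in> ?S" "b \<in> ?S" for a b
      using that matpow_pos_add[OF nonneg, where a = a and b = b and x = x and y = x and z = x]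
      by simp
    moreover have "0 \<notin> ?S" "Gcd ?S = 1"
      using assms(3) by (simp_all add: aperiodic_mat_def)
    ultimately obtain q where "q \<in> ?S" "Suc q \<in> ?S"
      using additive_set_has_consecutive by blast
    then show ?thesis
      using additive_set_contains_large[of ?S q] add by auto
  qed
  then obtain N0 where N0: "\<And>x n. N0 x \<le> n \<Longrightarrow> 0 < matpow A n x x"
    by metis
  obtain m where m: "\<And>x y. 0 < matpow A (m x y) x y"
    using assms(2) unfolding irreducible_mat_def by metis
  define N where "N = (\<Sum>x\<in>UNIV. N0 x) + (\<Sum>x\<in>UNIV. \<Sum>y\<in>UNIV. m x y)"
  have "0 < matpow A n x y" if "N \<le> n" for n x y
  proof -
    have "N0 x + m x y \<le> N"
      unfolding N_def by (intro add_mono member_le_sum order.trans[OF _ member_le_sum]) auto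
    then have "0 < matpow A ((n - m x y) + m x y) x y"
      using that by (intro matpow_pos_add[OF nonneg N0 m]) simp
    with \<open>N0 x + m x y \<le> N\<close> that show ?thesis
      by simp
  qed
  then show ?thesis
    by blast
qed

lemma invariant_prob_matpow:
  assumes "invariant_prob A \<pi>"
  shows "(\<Sum>x\<in>UNIV. \<pi> x * matpow A n x y) = \<pi> y"
proof (induction n arbitrary: y)
  case (Suc n)
  have "(\<Sum>x\<in>UNIV. \<pi> x * matpow A (Suc n) x y)
      = (\<Sum>w\<in>UNIV. (\<Sum>x\<in>UNIV. \<pi> x * matpow A n x w) * A w y)"
    by (simp add: sum_distrib_left sum_distrib_right mult.assoc) (rule sum.swap)
  then show ?case
    using assms by (simp add: Suc invariant_prob_def)
qed (simp add: if_distrib[of "\<lambda>t. _ * t"] cong: if_cong)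

lemma invariant_prob_pos:
  assumes "invariant_prob A \<pi>" "\<And>x y. 0 \<le> A x y" "\<And>x y. 0 < matpow A N x y"
  shows "0 < \<pi> y"
proof -
  obtain x where "0 < \<pi> x"
    using assms(1) sum_pos_imp_ex_pos[of \<pi> UNIV] by (auto simp: invariant_prob_def)
  then have "0 < \<pi> x * matpow A N x y"
    using assms(3) by simp
  also have "\<dots> \<le> (\<Sum>x\<in>UNIV. \<pi> x * matpow A N x y)"
    using assms(1,2) by (intro member_le_sum) (auto simp: invariant_prob_def matpow_nonneg)
  finally show ?thesis
    using invariant_prob_matpow[OF assms(1)] by simp
qed

context tilted_product
begin

lemma Phi_pos_iff: "0 < Phi P Q f \<theta> z z' \<longleftrightarrow> 0 < P (fst z) (fst z') \<and> 0 < Q (snd z) (snd z')"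
  using P_nonneg[of "fst z" "fst z'"] Q_nonneg[of "snd z" "snd z'"]
  by (simp add: Phi_eq zero_less_mult_iff mult.assoc)

lemma matpow_R_pos:
  "0 < matpow P n x x' \<Longrightarrow> 0 < matpow Q n y y' \<Longrightarrow> 0 < matpow R n (x, y) (x', y')"
proof (induction n arbitrary: x' y')
  case (Suc n)
  obtain w where "0 < matpow P n x w * P w x'"
    using Suc.prems(1) by (auto dest: sum_pos_imp_ex_pos)
  then have w: "0 < matpow P n x w" "0 < P w x'"
    using matpow_nonneg[of P n x w] P_nonneg by (auto simp: zero_less_mult_iff)
  obtain u where "0 < matpow Q n y u * Q u y'"
    using Suc.prems(2) by (auto dest: sum_pos_imp_ex_pos)
  then have u: "0 < matpow Q n y u" "0 < Q u y'"
    using matpow_nonneg[of Q n y u] Q_nonneg by (auto simp: zero_less_mult_iff)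
  have "0 < matpow R n (x, y) (w, u) * R (w, u) (x', y')"
    using Suc.IH[OF w(1) u(1)] w(2) u(2) by (simp add: R_pos_iff)
  also have "\<dots> \<le> matpow R (Suc n) (x, y) (x', y')"
    using kernel_nonneg by (auto intro!: member_le_sum mult_nonneg_nonneg matpow_nonneg)
  finally show ?case .
qed (simp split: if_splits)

lemma init_pos:
  assumes "irreducible_mat P" "aperiodic_mat P" "irreducible_mat Q" "aperiodic_mat Q"
  shows "0 < \<pi> z"
proof -
  obtain NP where NP: "\<And>n x y. NP \<le> n \<Longrightarrow> 0 < matpow P n x y"
    using primitive_matpow_pos[OF P assms(1,2)] by blast
  obtain NQ where NQ: "\<And>n x y. NQ \<le> n \<Longrightarrow> 0 < matpow Q n x y"
    using primitive_matpow_pos[OF Q assms(3,4)] by blast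
  have "0 < matpow R (max NP NQ) z' z''" for z' z''
    using matpow_R_pos[of "max NP NQ" "fst z'" "fst z''" "snd z'" "snd z''"] NP NQ by simp
  then show ?thesis
    by (rule invariant_prob_pos[OF invariant kernel_nonneg])
qed

end

section \<open>Cycles\<close>

lemma sum_periodic_shift:
  fixes h :: "nat \<Rightarrow> 'a::comm_monoid_add"
  assumes "\<And>k. h (k + L) = h k"
  shows "(\<Sum>k<L. h (s + k)) = (\<Sum>k<L. h k)"
proof (induction s)
  case (Suc s)
  have "(\<Sum>k<L. h (Suc s + k)) = (\<Sum>k<L. h (s + k))"
  proof (cases L)
    case (Suc L')
    have "(\<Sum>k<Suc L'. h (Suc s + k)) = (\<Sum>k<L'. h (s + Suc k)) + h (s + Suc L')"
      by simp
    also have "h (s + Suc L') = h (s + 0)"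
      using assms[of s] Suc by simp
    also have "(\<Sum>k<L'. h (s + Suc k)) + h (s + 0) = (\<Sum>k<Suc L'. h (s + k))"
      unfolding sum.lessThan_Suc_shift[where g = "\<lambda>k. h (s + k)"] by (rule add.commute)
    finally show ?thesis
      using Suc by simp
  qed simp
  with Suc.IH show ?case
    by simp
qed simp

lemma prod_periodic_shift:
  fixes h :: "nat \<Rightarrow> 'a::comm_monoid_mult"
  assumes "\<And>k. h (k + L) = h k"
  shows "(\<Prod>k<L. h (s + k)) = (\<Prod>k<L. h k)"
proof (induction s)
  case (Suc s)
  have "(\<Prod>k<L. h (Suc s + k)) = (\<Prod>k<L. h (s + k))"
  proof (cases L)
    case (Suc L')
    have "(\<Prod>k<Suc L'. h (Suc s + k)) = (\<Prod>k<L'. h (s + Suc k)) * h (s + Suc L')"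
      by simp
    also have "h (s + Suc L') = h (s + 0)"
      using assms[of s] Suc by simp
    also have "(\<Prod>k<L'. h (s + Suc k)) * h (s + 0) = (\<Prod>k<Suc L'. h (s + k))"
      unfolding prod.lessThan_Suc_shift[where g = "\<lambda>k. h (s + k)"] by (rule mult.commute)
    finally show ?thesis
      using Suc by simp
  qed simp
  with Suc.IH show ?case
    by simp
qed simp

lemma prod_lessThan_add:
  fixes h :: "nat \<Rightarrow> 'a::comm_monoid_mult"
  shows "(\<Prod>k<a + b. h k) = (\<Prod>k<a. h k) * (\<Prod>k<b. h (a + k))"
  by (induction b) (simp_all add: mult.assoc)

lemma prod_periodic_power:
  fixes h :: "nat \<Rightarrow> 'a::comm_monoid_mult"
  assumes "\<And>k. h (k + L) = h k"
  shows "(\<Prod>k<j * L. h k) = (\<Prod>k<L. h k) ^ j"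
proof (induction j)
  case (Suc j)
  have "(\<Prod>k<L + j * L. h k) = (\<Prod>k<L. h k) * (\<Prod>k<j * L. h (L + k))"
    by (rule prod_lessThan_add)
  also have "(\<Prod>k<j * L. h (L + k)) = (\<Prod>k<j * L. h k)"
    using assms by (simp add: add.commute)
  finally show ?case
    using Suc by simp
qed simp

lemma le_if_mult_powers_le:
  fixes a b c :: real
  assumes "0 < c" "0 < a" "\<And>j. c * a ^ j \<le> b ^ j"
  shows "a \<le> b"
proof (rule ccontr)
  assume "\<not> a \<le> b"
  with \<open>0 < a\<close> have "b / a < 1"
    by simp
  then obtain j where "(b / a) ^ j < c"
    using real_arch_pow_inv \<open>0 < c\<close> by blast
  with \<open>0 < a\<close> have "b ^ j < c * a ^ j"
    by (simp add: field_simps)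
  with assms(3)[of j] show False
    by simp
qed

context tilted_product
begin

definition cycle_weight :: "(nat \<Rightarrow> 'e \<times> 'e) \<Rightarrow> nat \<Rightarrow> real" where
  "cycle_weight g L = (\<Prod>k<L. Phi P Q f \<theta> (g k) (g (Suc k)))"

lemma path_weight_periodic:
  assumes "\<And>k. g (k + L) = g k"
  shows "path_weight R (map g [0..<Suc (j * L + c)])
    = cycle_weight g L ^ j * (\<Prod>k<c. Phi P Q f \<theta> (g k) (g (Suc k))) * r (g c) / r (g 0)"
proof -
  have shift: "g (j * L + k) = g k" for k
  proof (induction j)
    case (Suc j)
    have "Suc j * L + k = (j * L + k) + L"
      by simp
    with Suc assms show ?case
      by metis
  qed simp
  have "path_weight R (map g [0..<Suc (j * L + c)])
      = (\<Prod>k<j * L + c. Phi P Q f \<theta> (g k) (g (Suc k))) * r (g (j * L + c)) / r (g 0)"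
    by (rule path_weight_doob[OF r_pos])
  also have "(\<Prod>k<j * L + c. Phi P Q f \<theta> (g k) (g (Suc k)))
      = (\<Prod>k<j * L. Phi P Q f \<theta> (g k) (g (Suc k)))
        * (\<Prod>k<c. Phi P Q f \<theta> (g (j * L + k)) (g (Suc (j * L + k))))"
    by (rule prod_lessThan_add)
  also have "(\<Prod>k<j * L. Phi P Q f \<theta> (g k) (g (Suc k))) = cycle_weight g L ^ j"
    using assms unfolding cycle_weight_def by (intro prod_periodic_power) (metis add_Suc)
  finally show ?thesis
    using shift[of "Suc _"] by (simp add: shift)
qed

text \<open>Along \<open>j\<close> turns of the cycle the chain law decays like \<open>cycle_weight g L ^ j\<close>, while its
  lagged image is a path of the Markov law \<open>q\<close> and decays like \<open>cycle_weight gT L ^ j\<close>;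
  the lagged law dominates the chain law, so the rates compare.\<close>
lemma cycle_weight_le_lagged:
  assumes markov: "\<And>z v. lagged_law T (markov_law \<pi> R) (z # v)
      = lagged_law T (markov_law \<pi> R) [z] * path_weight R (z # v)"
    and init_pos: "\<And>z. 0 < \<pi> z"
    and periodic: "\<And>k. g (k + L) = g k"
    and pos: "\<And>k. 0 < Phi P Q f \<theta> (g k) (g (Suc k))"
  shows "cycle_weight g L \<le> cycle_weight (\<lambda>k. (fst (g k), snd (g (T + k)))) L"
proof -
  define q where "q = lagged_law T (markov_law \<pi> R)"
  define gT where "gT k = (fst (g k), snd (g (T + k)))" for k
  interpret lagged: law_on_paths R q
    unfolding q_def by (rule law_on_paths_lagged)
  have periodic_T: "gT (k + L) = gT k" for k
    using periodic[of k] periodic[of "T + k"] by (simp add: gT_def add.assoc)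
  define c where "c = \<pi> (g 0) * (\<Prod>k<T. Phi P Q f \<theta> (g k) (g (Suc k))) * r (g T) / r (g 0)"
  have "0 < c"
    using init_pos r_pos pos by (simp add: c_def prod_pos)
  moreover have "0 < cycle_weight g L"
    using pos by (simp add: cycle_weight_def prod_pos)
  moreover have "c * cycle_weight g L ^ j \<le> cycle_weight gT L ^ j" for j
  proof -
    let ?v = "map g [0..<Suc (j * L + T)]"
    let ?w = "map gT [0..<Suc (j * L + 0)]"
    have lag_v: "lag T ?v = ?w"
      using lag_map_upt[of T g "Suc (j * L)"] by (simp add: gT_def del: upt_Suc)
    have w_Cons: "?w = gT 0 # map gT [1..<Suc (j * L + 0)]"
      by (simp add: upt_conv_Cons del: upt_Suc)
    have "c * cycle_weight g L ^ j = markov_law \<pi> R ?v"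
      by (simp add: markov_law_map_upt path_weight_periodic[of g L, OF periodic] c_def del: upt_Suc)
    also have "\<dots> \<le> q (lag T ?v)"
      unfolding q_def by (rule lagged_law_ge) (simp_all add: chain.nonneg del: upt_Suc)
    also have "\<dots> = q [gT 0] * path_weight R ?w"
      unfolding lag_v q_def by (subst (1 2) w_Cons) (rule markov)
    also have "\<dots> = q [gT 0] * cycle_weight gT L ^ j"
      using path_weight_periodic[of gT L, OF periodic_T, of j 0] r_pos[of "gT 0"] by simp
    also have "\<dots> \<le> cycle_weight gT L ^ j"
      using lagged.le_prefix[of "[]" "[gT 0]"] pos
      by (intro mult_left_le_one_le) (simp_all add: lagged.nonneg cycle_weight_def prod_nonneg
          Phi_eq P_nonneg Q_nonneg)
    finally show ?thesis .
  qed
  ultimately show ?thesis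
    unfolding gT_def by (rule le_if_mult_powers_le)
qed

lemma cycle_weight_eq:
  "cycle_weight g L = exp (\<theta> * of_int (\<Sum>k<L. f (g (Suc k))))
    * (\<Prod>k<L. P (fst (g k)) (fst (g (Suc k)))) * (\<Prod>k<L. Q (snd (g k)) (snd (g (Suc k))))"
  by (simp add: cycle_weight_def Phi_eq prod.distrib exp_sum sum_distrib_left)

lemma cycle_sum_le_lagged:
  assumes markov: "\<And>z v. lagged_law T (markov_law \<pi> R) (z # v)
      = lagged_law T (markov_law \<pi> R) [z] * path_weight R (z # v)"
    and init_pos: "\<And>z. 0 < \<pi> z" and "0 < \<theta>"
    and periodic: "\<And>k. g (k + L) = g k"
    and pos_P: "\<And>k. 0 < P (fst (g k)) (fst (g (Suc k)))"
    and pos_Q: "\<And>k. 0 < Q (snd (g k)) (snd (g (Suc k)))"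
  shows "(\<Sum>k<L. f (g k)) \<le> (\<Sum>k<L. f (fst (g k), snd (g (T + k))))"
proof -
  define gT where "gT k = (fst (g k), snd (g (T + k)))" for k
  define C where "C = (\<Prod>k<L. P (fst (g k)) (fst (g (Suc k)))) * (\<Prod>k<L. Q (snd (g k)) (snd (g (Suc k))))"
  have "0 < C"
    using pos_P pos_Q by (simp add: C_def prod_pos)
  have periodic_T: "gT (k + L) = gT k" for k
    using periodic[of k] periodic[of "T + k"] by (simp add: gT_def add.assoc)
  have shift_sum: "(\<Sum>k<L. f (h (Suc k))) = (\<Sum>k<L. f (h k))" if "\<And>k. h (k + L) = h k" for h
    using sum_periodic_shift[of "\<lambda>k. f (h k)" L 1] that by simp
  have shift_Q: "(\<Prod>k<L. Q (snd (gT k)) (snd (gT (Suc k)))) = (\<Prod>k<L. Q (snd (g k)) (snd (g (Suc k))))"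
  proof -
    have "Q (snd (g (k + L))) (snd (g (Suc (k + L)))) = Q (snd (g k)) (snd (g (Suc k)))" for k
      using periodic[of k] periodic[of "Suc k"] by simp
    then have "(\<Prod>k<L. Q (snd (g (T + k))) (snd (g (Suc (T + k)))))
        = (\<Prod>k<L. Q (snd (g k)) (snd (g (Suc k))))"
      by (rule prod_periodic_shift)
    then show ?thesis
      by (simp add: gT_def)
  qed
  have fst_gT: "fst (gT k) = fst (g k)" for k
    by (simp add: gT_def)
  have "cycle_weight g L \<le> cycle_weight gT L"
    unfolding gT_def using pos_P pos_Q
    by (intro cycle_weight_le_lagged[of T g L, OF markov init_pos periodic]) (simp add: Phi_pos_iff)
  also have "cycle_weight g L = exp (\<theta> * of_int (\<Sum>k<L. f (g k))) * C"
    unfolding cycle_weight_eq shift_sum[of g, OF periodic] C_def by (simp only: mult.assoc)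
  also have "cycle_weight gT L = exp (\<theta> * of_int (\<Sum>k<L. f (gT k))) * C"
    unfolding cycle_weight_eq shift_sum[of gT, OF periodic_T] fst_gT shift_Q C_def
    by (simp only: mult.assoc)
  finally have "exp (\<theta> * of_int (\<Sum>k<L. f (g k))) \<le> exp (\<theta> * of_int (\<Sum>k<L. f (gT k)))"
    using \<open>0 < C\<close> by simp
  with \<open>0 < \<theta>\<close> show ?thesis
    by (simp add: gT_def del: of_int_sum)
qed

lemma cycle_sum_le_lagged_shift:
  assumes markov: "\<And>z v. lagged_law T (markov_law \<pi> R) (z # v)
      = lagged_law T (markov_law \<pi> R) [z] * path_weight R (z # v)"
    and init_pos: "\<And>z. 0 < \<pi> z" and "0 < \<theta>"
    and cycles: "is_cycle P n x" "is_cycle Q n y"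
  shows "(\<Sum>k<n. f (x k, y ((k + s) mod n))) \<le> (\<Sum>k<n. f (x k, y ((k + (s + T)) mod n)))"
proof -
  have "0 < n"
    using cycles(1) by (simp add: is_cycle_def)
  define g where "g k = (x (k mod n), y ((k + s) mod n))" for k
  have "(\<Sum>k<n. f (g k)) \<le> (\<Sum>k<n. f (fst (g k), snd (g (T + k))))"
  proof (rule cycle_sum_le_lagged[OF markov init_pos \<open>0 < \<theta>\<close>])
    show "g (k + n) = g k" for k
    proof -
      have "(k + n + s) mod n = (k + s) mod n"
        by (metis add.assoc add.commute mod_add_self2)
      then show ?thesis
        by (simp add: g_def)
    qed
    show "0 < P (fst (g k)) (fst (g (Suc k)))" for k
    proof -
      have "0 < P (x (k mod n)) (x (Suc (k mod n) mod n))"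
        using cycles(1) \<open>0 < n\<close> by (simp add: is_cycle_def)
      then show ?thesis
        by (simp add: g_def mod_Suc_eq)
    qed
    show "0 < Q (snd (g k)) (snd (g (Suc k)))" for k
    proof -
      have "0 < Q (y ((k + s) mod n)) (y (Suc ((k + s) mod n) mod n))"
        using cycles(2) \<open>0 < n\<close> by (simp add: is_cycle_def)
      then show ?thesis
        by (simp add: g_def mod_Suc_eq)
    qed
  qed
  then show ?thesis
    by (simp add: g_def add.commute add.left_commute)
qed

text \<open>If the lagged mean were not smaller, the lagged cycle sums \<open>S s\<close> would increase with each
  lag step \<open>T\<close>; after \<open>n\<close> steps the lag is back to \<open>0\<close>, so all of them would coincide.\<close>
lemma lagged_mean_less:
  assumes "0 < \<theta>"
    and irreducible: "irreducible_mat P" "aperiodic_mat P" "irreducible_mat Q" "aperiodic_mat Q"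
    and cycles: "is_cycle P n x" "is_cycle Q n y"
    and lag_sensitive: "(\<Sum>k<n. f (x k, y k)) \<noteq> (\<Sum>k<n. f (x k, y ((k + T) mod n)))"
  shows "mean_f (lagged_law T (markov_law \<pi> R)) < mean_f (markov_law \<pi> R)"
proof (rule ccontr)
  assume "\<not> ?thesis"
  then have markov: "lagged_law T (markov_law \<pi> R) (z # v)
      = lagged_law T (markov_law \<pi> R) [z] * path_weight R (z # v)" for z v
    using \<open>0 < \<theta>\<close> by (intro lagged_law_markov_if_mean_ge) simp_all
  define S where "S s = (\<Sum>k<n. f (x k, y ((k + s) mod n)))" for s
  have mono: "S a \<le> S (a + i * T)" for a i
  proof (induction i)
    case (Suc i)
    have "S (a + i * T) \<le> S (a + i * T + T)"
      unfolding S_def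
      by (rule cycle_sum_le_lagged_shift[OF markov init_pos[OF irreducible] \<open>0 < \<theta>\<close> cycles])
    with Suc show ?case
      by (simp add: add.commute add.left_commute)
  qed simp
  have "0 < n"
    using cycles(1) by (simp add: is_cycle_def)
  with mono[of 0 1] mono[of T "n - 1"] have "S 0 \<le> S T" "S T \<le> S (n * T)"
    by (simp_all add: mult_eq_if)
  moreover have "S (n * T) = S 0"
    by (simp add: S_def)
  ultimately have "S T = S 0"
    by simp
  with lag_sensitive show False
    by (simp add: S_def)
qed

lemma mean_f_markov_law: "mean_f (markov_law \<pi> R) = (\<Sum>z\<in>UNIV. \<pi> z * of_int (f z))"
  by (simp add: mean_f_def)

lemma markov_expect2_lagged:
  "markov_expect2 \<pi> R (1 + T) 1 (1 + T) (\<lambda>z z'. of_int (f (fst z, snd z')))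
    = mean_f (lagged_law T (markov_law \<pi> R))"
proof -
  define h where "h u = real_of_int (f (fst (u ! 0), snd (u ! T)))" for u :: "('e \<times> 'e) list"
  have "markov_expect2 \<pi> R (1 + T) 1 (1 + T) (\<lambda>z z'. of_int (f (fst z, snd z')))
      = (\<Sum>v\<in>words (1 + Suc T + 0). markov_law \<pi> R v * h (take (Suc T) (drop 1 v)))"
    by (simp add: markov_expect2_eq_sum_words h_def)
  also have "\<dots> = (\<Sum>u\<in>words (Suc T). markov_law \<pi> R u * h u)"
    by (rule chain.sum_window)
  also have "\<dots> = (\<Sum>v\<in>words (Suc 0 + T). markov_law \<pi> R v * of_int (f (lag T v ! 0)))"
    by (intro sum.cong) (auto simp: h_def nth_lag)
  also have "\<dots> = (\<Sum>u\<in>words (Suc 0). lagged_law T (markov_law \<pi> R) u * of_int (f (u ! 0)))"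
    by (rule sum_lagged_law[symmetric])
  finally show ?thesis
    by (simp add: mean_f_def sum_words_1)
qed

end

theorem lemma5p10:
  fixes P Q :: "'e::finite \<Rightarrow> 'e \<Rightarrow> real"
    and piP piQ :: "'e \<Rightarrow> real"
    and f :: "'e \<times> 'e \<Rightarrow> int"
    and \<theta>s :: real
    and rs :: "'e \<times> 'e \<Rightarrow> real"
    and pis :: "'e \<times> 'e \<Rightarrow> real"
    and T :: nat
  assumes P: "stochastic P" "irreducible_mat P" "aperiodic_mat P"
    and Q: "stochastic Q" "irreducible_mat Q" "aperiodic_mat Q"
    and piP: "invariant_prob P piP" and piQ: "invariant_prob Q piQ"
    and gcd_f: "Gcd (range f) = 1"
    and mu_neg: "(\<Sum>x\<in>UNIV. \<Sum>y\<in>UNIV. piP x * piQ y * of_int (f (x, y))) < 0"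
    and C1: "\<exists>n x y. is_cycle P n x \<and> is_cycle Q n y \<and> (\<Sum>k<n. f (x k, y k)) > 0"
    and C2: "\<forall>T'\<ge>1. \<exists>n x y. is_cycle P n x \<and> is_cycle Q n y \<and>
               (\<Sum>k<n. f (x k, y k)) \<noteq> (\<Sum>k<n. f (x k, y ((k + T') mod n)))"
    and theta: "\<theta>s > 0" "spectral_radius_mat (Phi P Q f \<theta>s) = 1"
    and rs: "\<forall>z. rs z > 0" "\<forall>z. (\<Sum>z'\<in>UNIV. Phi P Q f \<theta>s z z' * rs z') = rs z"
    and pis: "invariant_prob (doob (Phi P Q f \<theta>s) rs) pis"
    and T: "T \<ge> 1"
  shows "markov_expect2 pis (doob (Phi P Q f \<theta>s) rs) (1 + T) 1 (1 + T)
           (\<lambda>z z'. of_int (f (fst z, snd z')))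
         < (\<Sum>z\<in>UNIV. pis z * of_int (f z))"
proof -
  \<comment> \<open>The hypotheses on \<open>piP\<close>, \<open>piQ\<close>, \<open>gcd_f\<close>, \<open>mu_neg\<close>, \<open>C1\<close> and the spectral radius only
    guarantee that \<open>\<theta>s\<close>, \<open>rs\<close> and \<open>pis\<close> exist.\<close>
  interpret tilt: tilted_product P Q f \<theta>s rs pis
    using P(1) Q(1) rs pis by unfold_locales auto
  obtain n x y where "is_cycle P n x" "is_cycle Q n y"
    "(\<Sum>k<n. f (x k, y k)) \<noteq> (\<Sum>k<n. f (x k, y ((k + T) mod n)))"
    using C2 T by blast
  then have "tilt.mean_f (lagged_law T (markov_law pis (doob (Phi P Q f \<theta>s) rs)))
      < tilt.mean_f (markov_law pis (doob (Phi P Q f \<theta>s) rs))"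
    by (rule tilt.lagged_mean_less[OF theta(1) P(2,3) Q(2,3)])
  then show ?thesis
    by (simp only: tilt.markov_expect2_lagged tilt.mean_f_markov_law)
qed

end
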